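(* Let $T$ be a complete discrete valuation ring with fraction field $K$ and uniformizer $t$. Let $\widehat R_0 \supset T$ be a complete discrete valuation ring with uniformizer $t$ and fraction field $F_0$, with absolute value $|t^n u| = \alpha^{-n}$ ($\alpha>1$ fixed, $u \in \widehat R_0^\times$). Let $F_1, F_2 \subset F_0$ be subfields containing $T$ and let $V \subset F_1 \cap \widehat R_0$, $W \subset F_2 \cap \widehat R_0$ be $t$-adically complete $T$-submodules with $V + W = \widehat R_0$, $V \cap t\widehat R_0 = tV$ and $W \cap t\widehat R_0 = tW$. Let $a,b,c$ be positive integers, let $\Omega \subset F_0^a \times F_0^b$ be an open neighborhood of $(0,0)$ and let $f : \Omega \to F_0^c$ be an analytic map. Let $f^a(x) = f(x,0)$ and $f^b(y) = f(0,y)$ (defined near $0$). Assume (i) $f(0,0)=0$ and (ii) the differentials $Df^a_0 : F_0^a \to F_0^c$ and $Df^b_0 : F_0^b \to F_0^c$ satisfy $$Df^a_0\big(V[1/t]^a\big) + Df^b_0\big(W[1/t]^b\big) = F_0^c.$$ Then there is a real number $\epsilon>0$ such that for every $y \in F_0^c$ with $|y| \le \epsilon$ there exist $v \in V^a$ and $w \in W^b$ with $(v,w) \in \Omega$ and $f(v,w) = y$.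
   Context: $t$-adically complete means $V \to \varprojlim_m V/t^{m+1}V$ is an isomorphism. On $F_0^c$ one uses the max norm $|y| = \max_i |y_i|$. *)

theory Defs
  imports Main Complex_Main
begin

text \<open>All fields live inside the ambient field F0, taken to be a type 'a :: field.
  Vectors in F0^n are functions nat => 'a vanishing outside {..<n}.\<close>

definition subring :: "'a::field set \<Rightarrow> bool" where
  "subring S \<longleftrightarrow> 0 \<in> S \<and> 1 \<in> S \<and> (\<forall>x\<in>S. \<forall>y\<in>S. x + y \<in> S \<and> x - y \<in> S \<and> x * y \<in> S)"

definition subfield :: "'a::field set \<Rightarrow> bool" where
  "subfield S \<longleftrightarrow> subring S \<and> (\<forall>x\<in>S. x \<noteq> 0 \<longrightarrow> inverse x \<in> S)"

definition is_unit_in :: "'a::field set \<Rightarrow> 'a \<Rightarrow> bool" where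
  "is_unit_in R u \<longleftrightarrow> u \<in> R \<and> u \<noteq> 0 \<and> inverse u \<in> R"

definition dvr_unif :: "'a::field set \<Rightarrow> 'a \<Rightarrow> bool" where
  "dvr_unif R t \<longleftrightarrow> subring R \<and> t \<in> R \<and> t \<noteq> 0 \<and> inverse t \<notin> R \<and>
     (\<forall>x\<in>R. x \<noteq> 0 \<longrightarrow> (\<exists>n::nat. \<exists>u. is_unit_in R u \<and> x = t ^ n * u))"

definition dvr_frac :: "'a::field set \<Rightarrow> 'a \<Rightarrow> bool" where
  "dvr_frac R t \<longleftrightarrow> dvr_unif R t \<and>
     (\<forall>x::'a. x \<noteq> 0 \<longrightarrow> (\<exists>n::int. \<exists>u. is_unit_in R u \<and> x = t powi n * u))"

definition tpow_mod :: "'a::field \<Rightarrow> nat \<Rightarrow> 'a set \<Rightarrow> 'a set" where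
  "tpow_mod t k M = {t ^ k * x | x. x \<in> M}"

definition submodule :: "'a::field set \<Rightarrow> 'a set \<Rightarrow> bool" where
  "submodule T M \<longleftrightarrow> 0 \<in> M \<and> (\<forall>x\<in>M. \<forall>y\<in>M. x + y \<in> M) \<and> (\<forall>r\<in>T. \<forall>x\<in>M. r * x \<in> M)"

text \<open>t-adic completeness: M \<rightarrow> lim M / t^(m+1) M is bijective.\<close>
definition t_complete :: "'a::field \<Rightarrow> 'a set \<Rightarrow> bool" where
  "t_complete t M \<longleftrightarrow>
     (\<forall>x\<in>M. (\<forall>m. x \<in> tpow_mod t (Suc m) M) \<longrightarrow> x = 0) \<and>
     (\<forall>s::nat \<Rightarrow> 'a. (\<forall>m. s m \<in> M \<and> s (Suc m) - s m \<in> tpow_mod t (Suc m) M) \<longrightarrow>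
        (\<exists>x\<in>M. \<forall>m. x - s m \<in> tpow_mod t (Suc m) M))"

definition dv_abs :: "'a::field set \<Rightarrow> 'a \<Rightarrow> real \<Rightarrow> 'a \<Rightarrow> real" where
  "dv_abs R t \<alpha> x = (if x = 0 then 0 else
     \<alpha> powr (- real_of_int (THE n::int. \<exists>u. is_unit_in R u \<and> x = t powi n * u)))"

definition vecs :: "nat \<Rightarrow> (nat \<Rightarrow> 'a::zero) set" where
  "vecs n = {x. \<forall>i\<ge>n. x i = 0}"

definition zvec :: "nat \<Rightarrow> 'a::zero" where
  "zvec = (\<lambda>_. 0)"

definition vnorm :: "('a \<Rightarrow> real) \<Rightarrow> nat \<Rightarrow> (nat \<Rightarrow> 'a) \<Rightarrow> real" where
  "vnorm av n x = Max (insert 0 ((\<lambda>i. av (x i)) ` {..<n}))"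

definition vdiff :: "(nat \<Rightarrow> 'a::ab_group_add) \<Rightarrow> (nat \<Rightarrow> 'a) \<Rightarrow> nat \<Rightarrow> 'a" where
  "vdiff x y = (\<lambda>i. x i - y i)"

definition pnorm :: "('a \<Rightarrow> real) \<Rightarrow> nat \<Rightarrow> nat \<Rightarrow> (nat \<Rightarrow> 'a) \<times> (nat \<Rightarrow> 'a) \<Rightarrow> real" where
  "pnorm av a b p = max (vnorm av a (fst p)) (vnorm av b (snd p))"

definition open_in_prod :: "('a::ab_group_add \<Rightarrow> real) \<Rightarrow> nat \<Rightarrow> nat \<Rightarrow> ((nat \<Rightarrow> 'a) \<times> (nat \<Rightarrow> 'a)) set \<Rightarrow> bool" where
  "open_in_prod av a b \<Omega> \<longleftrightarrow> \<Omega> \<subseteq> vecs a \<times> vecs b \<and>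
     (\<forall>p\<in>\<Omega>. \<exists>r>0. \<forall>q\<in>vecs a \<times> vecs b.
        pnorm av a b (vdiff (fst q) (fst p), vdiff (snd q) (snd p)) < r \<longrightarrow> q \<in> \<Omega>)"

definition has_usum :: "('a::ab_group_add \<Rightarrow> real) \<Rightarrow> ('i \<Rightarrow> 'a) \<Rightarrow> 'i set \<Rightarrow> 'a \<Rightarrow> bool"
  where "has_usum av g I s \<longleftrightarrow> (\<forall>\<epsilon>>0. \<exists>F. finite F \<and> F \<subseteq> I \<and>
     (\<forall>G. finite G \<and> F \<subseteq> G \<and> G \<subseteq> I \<longrightarrow> av (sum g G - s) < \<epsilon>))"

definition midx :: "nat \<Rightarrow> (nat \<Rightarrow> nat) set" where
  "midx n = {m. \<forall>i\<ge>n. m i = 0}"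

definition monom :: "nat \<Rightarrow> (nat \<Rightarrow> 'a::comm_ring_1) \<Rightarrow> (nat \<Rightarrow> nat) \<Rightarrow> 'a" where
  "monom n z m = (\<Prod>i<n. z i ^ m i)"

definition analytic_on_prod ::
  "('a::field \<Rightarrow> real) \<Rightarrow> nat \<Rightarrow> nat \<Rightarrow> nat \<Rightarrow> ((nat \<Rightarrow> 'a) \<times> (nat \<Rightarrow> 'a)) set \<Rightarrow>
   ((nat \<Rightarrow> 'a) \<Rightarrow> (nat \<Rightarrow> 'a) \<Rightarrow> (nat \<Rightarrow> 'a)) \<Rightarrow> bool" where
  "analytic_on_prod av a b c \<Omega> f \<longleftrightarrow>
     (\<forall>p\<in>\<Omega>. f (fst p) (snd p) \<in> vecs c) \<and>
     (\<forall>p\<in>\<Omega>. \<exists>r>0. \<exists>C :: nat \<Rightarrow> (nat \<Rightarrow> nat) \<Rightarrow> (nat \<Rightarrow> nat) \<Rightarrow> 'a.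
        \<forall>q\<in>\<Omega>. pnorm av a b (vdiff (fst q) (fst p), vdiff (snd q) (snd p)) < r \<longrightarrow>
          (\<forall>k<c. has_usum av
             (\<lambda>(m, m'). C k m m' * monom a (vdiff (fst q) (fst p)) m * monom b (vdiff (snd q) (snd p)) m')
             (midx a \<times> midx b) (f (fst q) (snd q) k)))"

definition lin_map :: "nat \<Rightarrow> nat \<Rightarrow> ((nat \<Rightarrow> 'a::field) \<Rightarrow> (nat \<Rightarrow> 'a)) \<Rightarrow> bool" where
  "lin_map n m L \<longleftrightarrow> (\<forall>x\<in>vecs n. L x \<in> vecs m) \<and>
     (\<forall>x\<in>vecs n. \<forall>y\<in>vecs n. L (\<lambda>i. x i + y i) = (\<lambda>k. L x k + L y k)) \<and>
     (\<forall>s. \<forall>x\<in>vecs n. L (\<lambda>i. s * x i) = (\<lambda>k. s * L x k))"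

definition has_diff0 :: "('a::field \<Rightarrow> real) \<Rightarrow> nat \<Rightarrow> nat \<Rightarrow> (nat \<Rightarrow> 'a) set \<Rightarrow>
   ((nat \<Rightarrow> 'a) \<Rightarrow> (nat \<Rightarrow> 'a)) \<Rightarrow> ((nat \<Rightarrow> 'a) \<Rightarrow> (nat \<Rightarrow> 'a)) \<Rightarrow> bool" where
  "has_diff0 av n m D g L \<longleftrightarrow> lin_map n m L \<and>
     (\<forall>\<epsilon>>0. \<exists>\<delta>>0. \<forall>x\<in>vecs n. x \<in> D \<and> vnorm av n x < \<delta> \<longrightarrow>
        vnorm av m (\<lambda>k. g x k - g zvec k - L x k) \<le> \<epsilon> * vnorm av n x)"

definition loc_vecs :: "'a::field \<Rightarrow> 'a set \<Rightarrow> nat \<Rightarrow> (nat \<Rightarrow> 'a) set" where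
  "loc_vecs t M n = {x \<in> vecs n. \<forall>i<n. \<exists>j::nat. \<exists>v\<in>M. x i = v / t ^ j}"

end

theory Submission
  imports Defs "HOL-Library.Function_Algebras" "HOL-Library.Product_Plus"
begin

text \<open>The map \<open>f\<close> is linearized at the origin by the degree-one part \<open>L\<close> of its power series;
  since the absolute value is ultrametric, Cauchy's estimates for the coefficients make the
  remainder quadratically small on small balls. The hypothesis on the differentials says that
  every \<open>y \<in> R\<^sub>0\<^sup>c\<close> has a multiple \<open>t\<^sup>J y\<close> in \<open>L(V\<^sup>a \<times> W\<^sup>b)\<close>; a Baire-type argument using the
  completeness of \<open>R\<^sub>0\<close> makes \<open>J\<close> uniform, which yields an approximate inverse of \<open>L\<close> with values
  in \<open>V\<^sup>a \<times> W\<^sup>b\<close>. Newton's method with this fixed approximate inverse divides the residual by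
  \<open>\<alpha>\<close> at each step, and since \<open>V\<close> and \<open>W\<close> are saturated and \<open>t\<close>-adically complete the iterates
  converge inside \<open>V\<^sup>a \<times> W\<^sup>b\<close>.\<close>

type_synonym 'a vec = "nat \<Rightarrow> 'a"
type_synonym 'a vpair = "'a vec \<times> 'a vec"

section \<open>The discrete absolute value\<close>

lemma subringD:
  assumes "subring S"
  shows "0 \<in> S" "1 \<in> S" "x \<in> S \<Longrightarrow> y \<in> S \<Longrightarrow> x + y \<in> S"
    "x \<in> S \<Longrightarrow> y \<in> S \<Longrightarrow> x - y \<in> S" "x \<in> S \<Longrightarrow> y \<in> S \<Longrightarrow> x * y \<in> S"
  using assms unfolding subring_def by auto

lemma subring_uminus: "subring S \<Longrightarrow> x \<in> S \<Longrightarrow> - x \<in> S"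
  using subringD(4)[of S 0 x] subringD(1)[of S] by simp

lemma subring_power: "subring S \<Longrightarrow> x \<in> S \<Longrightarrow> x ^ n \<in> S"
  by (induction n) (auto intro: subringD)

lemma is_unit_in_mult: "subring R \<Longrightarrow> is_unit_in R u \<Longrightarrow> is_unit_in R v \<Longrightarrow> is_unit_in R (u * v)"
  unfolding is_unit_in_def by (auto intro: subringD simp: inverse_mult_distrib)

lemma is_unit_in_inverse: "is_unit_in R u \<Longrightarrow> is_unit_in R (inverse u)"
  unfolding is_unit_in_def by auto

locale discretely_valued =
  fixes R0 :: "'a::field set" and t :: 'a and \<alpha> :: real
  assumes dvr: "dvr_frac R0 t" and R0_complete: "t_complete t R0" and alpha_gt_1: "\<alpha> > 1"
begin

abbreviation av :: "'a \<Rightarrow> real" where "av \<equiv> dv_abs R0 t \<alpha>"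

abbreviation \<beta> :: real where "\<beta> \<equiv> inverse \<alpha>"

lemma beta_pos: "\<beta> > 0" and beta_less_1: "\<beta> < 1"
  using alpha_gt_1 by (auto simp: field_simps)

lemma R0_subring: "subring R0" and t_in_R0: "t \<in> R0" and t_nonzero: "t \<noteq> 0"
  and inverse_t_notin_R0: "inverse t \<notin> R0"
  using dvr unfolding dvr_frac_def dvr_unif_def by auto

lemmas R0_closed = subringD[OF R0_subring] subring_uminus[OF R0_subring]

lemma tpow_in_R0: "t ^ n \<in> R0"
  using subring_power[OF R0_subring t_in_R0] .

lemma is_unit_in_1: "is_unit_in R0 1"
  unfolding is_unit_in_def using R0_closed by auto

lemma tpow_Suc_not_unit: "\<not> is_unit_in R0 (t ^ Suc d)"
proof
  assume u: "is_unit_in R0 (t ^ Suc d)"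
  have "inverse t = t ^ d * inverse (t ^ Suc d)"
    using t_nonzero by (simp add: field_simps)
  also have "\<dots> \<in> R0"
    using u tpow_in_R0 R0_closed(5) unfolding is_unit_in_def by blast
  finally show False using inverse_t_notin_R0 by simp
qed

lemma unit_factorization_unique:
  assumes "is_unit_in R0 u" "is_unit_in R0 u'" "t powi n * u = t powi m * u'"
  shows "n = m"
proof -
  have less: False if "is_unit_in R0 u" "is_unit_in R0 u'" "t powi n * u = t powi m * u'" "m < n"
    for u u' n m
  proof -
    define d where "d = nat (n - m - 1)"
    have d: "n - m = int (Suc d)" using \<open>m < n\<close> unfolding d_def by simp
    have "t powi n = t powi m * t powi (n - m)"
      using t_nonzero by (simp add: power_int_add[symmetric])
    with that(3) have "t powi (n - m) * u = u'"
      using t_nonzero by (simp add: mult.assoc)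
    moreover have "t powi (n - m) = t ^ Suc d" using d by (metis power_int_of_nat)
    ultimately have "t ^ Suc d = u' * inverse u"
      using that(1) unfolding is_unit_in_def by (simp add: field_simps)
    thus False
      using tpow_Suc_not_unit is_unit_in_mult[OF R0_subring that(2) is_unit_in_inverse[OF that(1)]]
      by metis
  qed
  show ?thesis
    using less[OF assms] less[OF assms(2,1) assms(3)[symmetric]] not_less_iff_gr_or_eq by blast
qed

definition val :: "'a \<Rightarrow> int" where
  "val x = (THE n. \<exists>u. is_unit_in R0 u \<and> x = t powi n * u)"

lemma val_eqI:
  assumes "is_unit_in R0 u" "x = t powi n * u"
  shows "val x = n"
  unfolding val_def using assms unit_factorization_unique by (intro the_equality) blast+

lemma val_factorization:
  assumes "x \<noteq> 0"
  obtains u where "is_unit_in R0 u" "x = t powi (val x) * u"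
proof -
  obtain n u where nu: "is_unit_in R0 u" "x = t powi n * u"
    using dvr assms unfolding dvr_frac_def by blast
  with val_eqI[OF nu] show ?thesis using that by simp
qed

lemma val_mult:
  assumes "x \<noteq> 0" "y \<noteq> 0"
  shows "val (x * y) = val x + val y"
proof -
  obtain u v where u: "is_unit_in R0 u" "x = t powi (val x) * u"
    and v: "is_unit_in R0 v" "y = t powi (val y) * v"
    using val_factorization assms by metis
  have "x * y = t powi (val x + val y) * (u * v)"
    using t_nonzero by (subst u(2), subst v(2)) (simp add: power_int_add mult_ac)
  thus ?thesis using val_eqI is_unit_in_mult[OF R0_subring u(1) v(1)] by blast
qed

lemma val_tpowi: "val (t powi n) = n"
  using val_eqI[OF is_unit_in_1] by simp

lemma mem_R0_iff_val_nonneg: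
  assumes "x \<noteq> 0"
  shows "x \<in> R0 \<longleftrightarrow> val x \<ge> 0"
proof
  assume "x \<in> R0"
  then obtain n :: nat and u where "is_unit_in R0 u" "x = t ^ n * u"
    using dvr assms unfolding dvr_frac_def dvr_unif_def by blast
  hence "val x = int n" using val_eqI by (metis power_int_of_nat)
  thus "val x \<ge> 0" by simp
next
  assume "val x \<ge> 0"
  then obtain n :: nat where n: "val x = int n" by (metis nonneg_int_cases)
  obtain u where u: "is_unit_in R0 u" "x = t powi (val x) * u"
    using val_factorization assms by blast
  have "x = t ^ n * u" using u(2) n by (simp add: power_int_of_nat)
  thus "x \<in> R0" using tpow_in_R0 u(1) R0_closed(5) unfolding is_unit_in_def by metis
qed

lemma val_add:
  assumes "x \<noteq> 0" "y \<noteq> 0" "x + y \<noteq> 0"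
  shows "val (x + y) \<ge> min (val x) (val y)"
proof -
  define m where "m = min (val x) (val y)"
  have tm: "t powi (- m) \<noteq> 0" using t_nonzero by simp
  have "x * t powi (- m) \<in> R0" "y * t powi (- m) \<in> R0"
    using assms tm val_mult val_tpowi mem_R0_iff_val_nonneg unfolding m_def by auto
  hence "(x + y) * t powi (- m) \<in> R0" using R0_closed(3) by (simp add: distrib_right)
  thus ?thesis
    using mem_R0_iff_val_nonneg[of "(x + y) * t powi (- m)"] assms(3) tm val_mult val_tpowi
    unfolding m_def by simp
qed

lemma av_val: "x \<noteq> 0 \<Longrightarrow> av x = \<alpha> powr (- of_int (val x))"
  unfolding dv_abs_def val_def by simp

lemma av_0 [simp]: "av 0 = 0"
  unfolding dv_abs_def by simp

lemma av_pos: "x \<noteq> 0 \<Longrightarrow> av x > 0"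
  using av_val alpha_gt_1 by simp

lemma av_nonneg [simp]: "av x \<ge> 0"
  using av_pos[of x] by (cases "x = 0") auto

lemma av_eq_0_iff [simp]: "av x = 0 \<longleftrightarrow> x = 0"
  using av_pos[of x] by (cases "x = 0") auto

lemma av_mult: "av (x * y) = av x * av y"
  by (cases "x = 0"; cases "y = 0") (auto simp: av_val val_mult powr_add[symmetric] algebra_simps)

lemma av_1 [simp]: "av 1 = 1"
  using val_tpowi[of 0] av_val[of 1] alpha_gt_1 by simp

lemma av_uminus [simp]: "av (- x) = av x"
proof -
  have "av (- 1) * av (- 1) = 1" using av_mult[of "- 1" "- 1"] by simp
  hence "av (- 1) = 1"
    using av_nonneg[of "- 1"] by (metis abs_of_nonneg abs_square_eq_1 power2_eq_square)
  thus ?thesis using av_mult[of "- 1" x] by simp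
qed

lemma av_minus_commute: "av (x - y) = av (y - x)"
  using av_uminus[of "x - y"] by simp

lemma av_add: "av (x + y) \<le> max (av x) (av y)"
proof (cases "x = 0 \<or> y = 0 \<or> x + y = 0")
  case False
  hence "val (x + y) \<ge> min (val x) (val y)" using val_add by auto
  thus ?thesis using False alpha_gt_1 av_val
    by (smt (verit, ccfv_SIG) of_int_le_iff powr_mono)
qed (auto simp: le_max_iff_disj)

lemma av_diff: "av (x - y) \<le> max (av x) (av y)"
  using av_add[of x "- y"] by simp

lemma av_power: "av (x ^ k) = av x ^ k"
  by (induction k) (auto simp: av_mult)

lemma av_prod: "av (prod g S) = (\<Prod>i\<in>S. av (g i))"
  by (induction S rule: infinite_finite_induct) (auto simp: av_mult)

lemma av_sum_le:
  "finite G \<Longrightarrow> B \<ge> 0 \<Longrightarrow> (\<And>i. i \<in> G \<Longrightarrow> av (g i) \<le> B) \<Longrightarrow> av (sum g G) \<le> B"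
proof (induction G rule: finite_induct)
  case (insert x F)
  hence "av (g x) \<le> B" "av (sum g F) \<le> B" by auto
  thus ?case using av_add[of "g x" "sum g F"] insert(1,2) by simp
qed simp

lemma av_inverse: "av (inverse x) = inverse (av x)"
proof (cases "x = 0")
  case False
  hence "av x * av (inverse x) = 1" using av_mult[of x "inverse x"] by simp
  thus ?thesis using inverse_unique by metis
qed simp

lemma av_divide: "av (x / y) = av x / av y"
  by (simp add: divide_inverse av_mult av_inverse)

lemma av_t: "av t = \<beta>"
  using av_val[OF t_nonzero] val_tpowi[of 1] alpha_gt_1 by (simp add: powr_minus)

lemma av_tpow: "av (t ^ n) = \<beta> ^ n"
  by (simp add: av_power av_t)

lemma mem_R0_iff_av_le_1: "x \<in> R0 \<longleftrightarrow> av x \<le> 1"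
proof (cases "x = 0")
  case False
  have "\<alpha> powr (- of_int (val x)) \<le> \<alpha> powr 0 \<longleftrightarrow> - of_int (val x) \<le> (0::real)"
    using powr_le_cancel_iff[OF alpha_gt_1] by blast
  thus ?thesis using mem_R0_iff_val_nonneg[OF False] av_val[OF False] alpha_gt_1 by simp
qed (simp add: R0_closed)

lemma av_in_value_group:
  assumes "x \<noteq> 0" "av x \<le> 1"
  obtains n where "av x = \<beta> ^ n"
proof -
  obtain n where n: "val x = int n"
    using mem_R0_iff_val_nonneg assms mem_R0_iff_av_le_1 nonneg_int_cases by metis
  have "\<beta> ^ n = \<alpha> powr (- real n)"
    using alpha_gt_1 by (simp add: powr_minus powr_realpow power_inverse)
  thus ?thesis using that[of n] av_val[OF assms(1)] n by simp
qed

lemma mem_tpow_mod_iff: "x \<in> tpow_mod t n M \<longleftrightarrow> x / t ^ n \<in> M"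
proof
  assume "x \<in> tpow_mod t n M"
  thus "x / t ^ n \<in> M" using t_nonzero unfolding tpow_mod_def by auto
next
  assume "x / t ^ n \<in> M"
  moreover have "x = t ^ n * (x / t ^ n)" using t_nonzero by simp
  ultimately show "x \<in> tpow_mod t n M" unfolding tpow_mod_def by blast
qed

lemma av_le_beta_power_iff: "av x \<le> \<beta> ^ n \<longleftrightarrow> x \<in> tpow_mod t n R0"
proof -
  have "x / t ^ n \<in> R0 \<longleftrightarrow> av x / \<beta> ^ n \<le> 1"
    using mem_R0_iff_av_le_1 by (simp add: av_divide av_tpow)
  also have "\<dots> \<longleftrightarrow> av x \<le> \<beta> ^ n" using beta_pos by simp
  finally show ?thesis using mem_tpow_mod_iff by simp
qed

lemma beta_power_small: "e > 0 \<Longrightarrow> \<exists>n. \<beta> ^ n < e"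
  using real_arch_pow_inv beta_pos beta_less_1 by blast

lemma le_0_if_le_geometric:
  assumes "\<And>k. X \<le> K * \<beta> ^ k"
  shows "X \<le> 0"
proof -
  have "(\<lambda>k. K * \<beta> ^ k) \<longlonglongrightarrow> 0"
    using beta_pos beta_less_1 by (intro tendsto_mult_right_zero LIMSEQ_power_zero) simp
  thus ?thesis using assms by (intro LIMSEQ_le_const) auto
qed

end

definition vscale :: "'a::times \<Rightarrow> 'a vec \<Rightarrow> 'a vec" where
  "vscale z x = (\<lambda>i. z * x i)"

definition pscale :: "'a::times \<Rightarrow> 'a vpair \<Rightarrow> 'a vpair" where
  "pscale z h = (vscale z (fst h), vscale z (snd h))"

definition vecs_in :: "'a set \<Rightarrow> nat \<Rightarrow> 'a::zero vec set" where
  "vecs_in M n = {x \<in> vecs n. \<forall>i<n. x i \<in> M}"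

lemma zvec_eq_0 [simp]: "zvec = 0"
  unfolding zvec_def by (simp add: zero_fun_def)

lemma vdiff_eq_minus [simp]: "vdiff x y = x - y"
  unfolding vdiff_def by (simp add: fun_diff_def)

lemma vscale_apply [simp]: "vscale z x i = z * x i"
  unfolding vscale_def by simp

lemma pscale_simps [simp]: "fst (pscale z h) = vscale z (fst h)" "snd (pscale z h) = vscale z (snd h)"
  unfolding pscale_def by simp_all

lemma vscale_add: "vscale (z::'a::ring) (x + y) = vscale z x + vscale z y"
  by (simp add: fun_eq_iff distrib_left)

lemma vscale_diff: "vscale (z::'a::ring) (x - y) = vscale z x - vscale z y"
  by (simp add: fun_eq_iff right_diff_distrib)

lemma vscale_vscale: "vscale (z::'a::semigroup_mult) (vscale z' x) = vscale (z * z') x"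
  by (simp add: fun_eq_iff mult.assoc)

lemma zero_in_vecs [simp]: "0 \<in> vecs n"
  unfolding vecs_def by simp

lemma vecs_add [intro]: "(x::'a::monoid_add vec) \<in> vecs n \<Longrightarrow> y \<in> vecs n \<Longrightarrow> x + y \<in> vecs n"
  unfolding vecs_def by simp

lemma vecs_diff [intro]: "(x::'a::group_add vec) \<in> vecs n \<Longrightarrow> y \<in> vecs n \<Longrightarrow> x - y \<in> vecs n"
  unfolding vecs_def by simp

lemma vecs_vscale [intro]: "(x::'a::mult_zero vec) \<in> vecs n \<Longrightarrow> vscale z x \<in> vecs n"
  unfolding vecs_def by simp

lemma vecs_in_subset_vecs: "vecs_in M n \<subseteq> vecs n"
  unfolding vecs_in_def by auto

lemma zero_in_vecs_in: "0 \<in> M \<Longrightarrow> 0 \<in> vecs_in M n"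
  unfolding vecs_in_def by simp

lemma vecs_in_add:
  fixes x y :: "'a::monoid_add vec"
  shows "(\<And>x y. x \<in> M \<Longrightarrow> y \<in> M \<Longrightarrow> x + y \<in> M) \<Longrightarrow> x \<in> vecs_in M n \<Longrightarrow> y \<in> vecs_in M n \<Longrightarrow>
    x + y \<in> vecs_in M n"
  unfolding vecs_in_def by auto

lemma vecs_in_diff:
  fixes x y :: "'a::group_add vec"
  shows "(\<And>x y. x \<in> M \<Longrightarrow> y \<in> M \<Longrightarrow> x - y \<in> M) \<Longrightarrow> x \<in> vecs_in M n \<Longrightarrow> y \<in> vecs_in M n \<Longrightarrow>
    x - y \<in> vecs_in M n"
  unfolding vecs_in_def by auto

lemma vecs_in_vscale:
  fixes x :: "'a::mult_zero vec"
  shows "(\<And>x. x \<in> M \<Longrightarrow> z * x \<in> M) \<Longrightarrow> x \<in> vecs_in M n \<Longrightarrow> vscale z x \<in> vecs_in M n"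
  unfolding vecs_in_def by auto

lemma vnorm_nonneg: "vnorm av n x \<ge> 0"
  unfolding vnorm_def by (simp add: Max_ge_iff)

lemma vnorm_coord_le: "i < n \<Longrightarrow> av (x i) \<le> vnorm av n x"
  unfolding vnorm_def by (rule Max_ge) auto

lemma vnorm_le_iff: "B \<ge> 0 \<Longrightarrow> vnorm av n x \<le> B \<longleftrightarrow> (\<forall>i<n. av (x i) \<le> B)"
  unfolding vnorm_def by (auto simp: Max_le_iff)

lemma vnorm_leI: "B \<ge> 0 \<Longrightarrow> (\<And>i. i < n \<Longrightarrow> av (x i) \<le> B) \<Longrightarrow> vnorm av n x \<le> B"
  using vnorm_le_iff by blast

lemma vnorm_attained: "vnorm av n x = 0 \<or> (\<exists>i<n. vnorm av n x = av (x i))"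
proof -
  have "vnorm av n x \<in> insert 0 ((\<lambda>i. av (x i)) ` {..<n})"
    unfolding vnorm_def by (rule Max_in) auto
  thus ?thesis by auto
qed

lemma pnorm_nonneg: "pnorm av a b h \<ge> 0"
  unfolding pnorm_def using vnorm_nonneg by (metis le_max_iff_disj)

lemma pnorm_le_iff:
  "B \<ge> 0 \<Longrightarrow> pnorm av a b h \<le> B \<longleftrightarrow> vnorm av a (fst h) \<le> B \<and> vnorm av b (snd h) \<le> B"
  unfolding pnorm_def by simp

lemma vnorm_fst_le_pnorm: "vnorm av a (fst h) \<le> pnorm av a b h"
  and vnorm_snd_le_pnorm: "vnorm av b (snd h) \<le> pnorm av a b h"
  unfolding pnorm_def by simp_all

lemma pnorm_fst_coord_le: "i < a \<Longrightarrow> av (fst h i) \<le> pnorm av a b h"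
  and pnorm_snd_coord_le: "j < b \<Longrightarrow> av (snd h j) \<le> pnorm av a b h"
  using vnorm_coord_le vnorm_fst_le_pnorm vnorm_snd_le_pnorm by (metis order_trans)+

context discretely_valued
begin

lemma vnorm_eq_0_iff: "vnorm av n x = 0 \<longleftrightarrow> (\<forall>i<n. x i = 0)"
  using vnorm_le_iff[of 0 av n x] vnorm_nonneg[of av n x] av_nonneg
  by (metis av_eq_0_iff order_antisym)

lemma vnorm_eq_0_imp_eq_0:
  assumes "x \<in> vecs n" "vnorm av n x = 0"
  shows "x = 0"
proof
  fix i show "x i = 0 i"
    using assms vnorm_eq_0_iff unfolding vecs_def by (cases "i < n") auto
qed

lemma vnorm_zero [simp]: "vnorm av n 0 = 0"
  using vnorm_eq_0_iff by simp

lemma vnorm_add: "vnorm av n (x + y) \<le> max (vnorm av n x) (vnorm av n y)"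
proof (rule vnorm_leI)
  show "0 \<le> max (vnorm av n x) (vnorm av n y)" by (simp add: vnorm_nonneg le_max_iff_disj)
  fix i assume "i < n"
  have "av ((x + y) i) \<le> max (av (x i)) (av (y i))" using av_add by simp
  also have "\<dots> \<le> max (vnorm av n x) (vnorm av n y)"
    using vnorm_coord_le[OF \<open>i < n\<close>] by (intro max.mono)
  finally show "av ((x + y) i) \<le> max (vnorm av n x) (vnorm av n y)" .
qed

lemma vnorm_diff: "vnorm av n (x - y) \<le> max (vnorm av n x) (vnorm av n y)"
  using vnorm_add[of n x "- y"] unfolding vnorm_def by simp

lemma vnorm_minus_commute: "vnorm av n (x - y) = vnorm av n (y - x)"
  unfolding vnorm_def using av_minus_commute by simp

lemma vnorm_vscale: "vnorm av n (vscale z x) = av z * vnorm av n x"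
proof (rule antisym)
  show "vnorm av n (vscale z x) \<le> av z * vnorm av n x"
    using vnorm_coord_le[of _ n av x] vnorm_nonneg[of av n x]
    by (intro vnorm_leI) (auto simp: av_mult mult_left_mono)
  show "av z * vnorm av n x \<le> vnorm av n (vscale z x)"
    using vnorm_attained[of av n x] vnorm_coord_le[of _ n av "vscale z x"] vnorm_nonneg
    by (auto simp: av_mult)
qed

lemma pnorm_add: "pnorm av a b (g + h) \<le> max (pnorm av a b g) (pnorm av a b h)"
  unfolding pnorm_def using vnorm_add[of a "fst g" "fst h"] vnorm_add[of b "snd g" "snd h"]
  by auto

lemma pnorm_pscale: "pnorm av a b (pscale z h) = av z * pnorm av a b h"
  unfolding pnorm_def by (simp add: vnorm_vscale max_mult_distrib_left)

lemma pnorm_zero [simp]: "pnorm av a b 0 = 0"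
  unfolding pnorm_def by simp

lemma pnorm_eq_0_imp_eq_0:
  assumes "q \<in> vecs a \<times> vecs b" "pnorm av a b q = 0"
  shows "q = 0"
proof -
  have "vnorm av a (fst q) = 0" "vnorm av b (snd q) = 0"
    using assms(2) pnorm_le_iff[of 0 av a b q] vnorm_nonneg[of av a "fst q"] vnorm_nonneg[of av b "snd q"]
    by simp_all
  thus ?thesis using assms(1) vnorm_eq_0_imp_eq_0 by (auto intro: prod_eqI)
qed

lemma vnorm_in_value_group:
  assumes "vnorm av n x \<noteq> 0" "vnorm av n x \<le> 1"
  shows "\<exists>k. vnorm av n x = \<beta> ^ k"
proof -
  obtain i where "i < n" "vnorm av n x = av (x i)"
    using vnorm_attained[of av n x] assms(1) by blast
  thus ?thesis using av_in_value_group[of "x i"] assms by auto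
qed

lemma vecs_in_R0_iff: "x \<in> vecs_in R0 n \<longleftrightarrow> x \<in> vecs n \<and> vnorm av n x \<le> 1"
  unfolding vecs_in_def by (auto simp: vnorm_le_iff mem_R0_iff_av_le_1)

end

context discretely_valued
begin

lemma has_usumD:
  assumes "has_usum av g I s" "e > 0"
  obtains F where "finite F" "F \<subseteq> I"
    "\<And>G. finite G \<Longrightarrow> F \<subseteq> G \<Longrightarrow> G \<subseteq> I \<Longrightarrow> av (sum g G - s) < e"
proof -
  have "\<exists>F. finite F \<and> F \<subseteq> I \<and> (\<forall>G. finite G \<and> F \<subseteq> G \<and> G \<subseteq> I \<longrightarrow> av (sum g G - s) < e)"
    using assms unfolding has_usum_def by simp
  then obtain F where F: "finite F" "F \<subseteq> I"
    "\<forall>G. finite G \<and> F \<subseteq> G \<and> G \<subseteq> I \<longrightarrow> av (sum g G - s) < e"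
    by (elim exE conjE)
  show ?thesis by (rule that[OF F(1,2)]) (use F(3) in blast)
qed

lemma has_usum_add:
  assumes "has_usum av g I s" "has_usum av h I s'"
  shows "has_usum av (\<lambda>i. g i + h i) I (s + s')"
  unfolding has_usum_def
proof (intro allI impI)
  fix e :: real assume "e > 0"
  then obtain F1 F2 where F: "finite F1" "F1 \<subseteq> I" "finite F2" "F2 \<subseteq> I"
    and F1: "\<And>G. finite G \<Longrightarrow> F1 \<subseteq> G \<Longrightarrow> G \<subseteq> I \<Longrightarrow> av (sum g G - s) < e"
    and F2: "\<And>G. finite G \<Longrightarrow> F2 \<subseteq> G \<Longrightarrow> G \<subseteq> I \<Longrightarrow> av (sum h G - s') < e"
    using has_usumD[OF assms(1)] has_usumD[OF assms(2)] by metis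
  have "av (sum (\<lambda>i. g i + h i) G - (s + s')) < e"
    if "finite G" "F1 \<union> F2 \<subseteq> G" "G \<subseteq> I" for G
  proof -
    have "sum (\<lambda>i. g i + h i) G - (s + s') = (sum g G - s) + (sum h G - s')"
      by (simp add: sum.distrib)
    hence "av (sum (\<lambda>i. g i + h i) G - (s + s')) \<le> max (av (sum g G - s)) (av (sum h G - s'))"
      using av_add by metis
    moreover have "av (sum g G - s) < e" "av (sum h G - s') < e" using F1 F2 that by auto
    ultimately show ?thesis by simp
  qed
  thus "\<exists>F. finite F \<and> F \<subseteq> I \<and>
      (\<forall>G. finite G \<and> F \<subseteq> G \<and> G \<subseteq> I \<longrightarrow> av (sum (\<lambda>i. g i + h i) G - (s + s')) < e)"
    using F by (intro exI[of _ "F1 \<union> F2"]) auto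
qed

lemma has_usum_uminus: "has_usum av g I s \<Longrightarrow> has_usum av (\<lambda>i. - g i) I (- s)"
proof -
  have "av (sum (\<lambda>i. - g i) G - (- s)) = av (sum g G - s)" for G
    using av_uminus[of "sum g G - s"] by (simp add: sum_negf)
  thus "has_usum av g I s \<Longrightarrow> has_usum av (\<lambda>i. - g i) I (- s)"
    unfolding has_usum_def by presburger
qed

lemma has_usum_diff:
  "has_usum av g I s \<Longrightarrow> has_usum av h I s' \<Longrightarrow> has_usum av (\<lambda>i. g i - h i) I (s - s')"
  using has_usum_add[OF _ has_usum_uminus, of g I s h s'] by simp

lemma has_usum_finite_support:
  assumes "finite S" "S \<subseteq> I" "\<And>i. i \<in> I \<Longrightarrow> i \<notin> S \<Longrightarrow> g i = 0"
  shows "has_usum av g I (sum g S)"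
  unfolding has_usum_def
proof (intro allI impI exI[of _ S] conjI allI impI)
  fix e :: real and G assume "e > 0" "finite G \<and> S \<subseteq> G \<and> G \<subseteq> I"
  moreover from this have "sum g G = sum g S" using assms(3) by (intro sum.mono_neutral_right) auto
  ultimately show "av (sum g G - sum g S) < e" by simp
qed (use assms in auto)

lemma has_usum_av_le:
  assumes "has_usum av g I s" "B \<ge> 0" "\<And>i. i \<in> I \<Longrightarrow> av (g i) \<le> B"
  shows "av s \<le> B"
proof (rule ccontr)
  assume "\<not> av s \<le> B"
  then obtain F where F: "finite F" "F \<subseteq> I"
    "\<And>G. finite G \<Longrightarrow> F \<subseteq> G \<Longrightarrow> G \<subseteq> I \<Longrightarrow> av (sum g G - s) < av s - B"
    using has_usumD[OF assms(1), of "av s - B"] by auto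
  note F(3)[OF F(1) order_refl F(2)]
  have "av (sum g F) \<le> B" using F assms by (intro av_sum_le) auto
  moreover have "av s \<le> max (av (sum g F)) (av (sum g F - s))"
    using av_diff[of "sum g F" "sum g F - s"] by simp
  ultimately show False
    using \<open>av (sum g F - s) < av s - B\<close> \<open>\<not> av s \<le> B\<close> assms(2)
    by (simp add: max_def split: if_splits)
qed

text \<open>A single term is the difference of two partial sums close to the limit.\<close>

lemma has_usum_terms_bounded:
  assumes "has_usum av g I s"
  obtains B where "B \<ge> 0" "\<And>i. i \<in> I \<Longrightarrow> av (g i) \<le> B"
proof -
  obtain F where F: "finite F" "F \<subseteq> I"
    "\<And>G. finite G \<Longrightarrow> F \<subseteq> G \<Longrightarrow> G \<subseteq> I \<Longrightarrow> av (sum g G - s) < 1"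
    using has_usumD[OF assms zero_less_one] by metis
  define B where "B = max 1 (Max (insert 0 ((\<lambda>i. av (g i)) ` F)))"
  have "av (g i) \<le> B" if "i \<in> I" for i
  proof (cases "i \<in> F")
    case True
    have "av (g i) \<le> Max (insert 0 ((\<lambda>i. av (g i)) ` F))"
      by (rule Max_ge) (use F(1) True in auto)
    thus ?thesis unfolding B_def by simp
  next
    case False
    have "g i = (sum g (insert i F) - s) - (sum g F - s)" using False F(1) by simp
    hence "av (g i) \<le> max (av (sum g (insert i F) - s)) (av (sum g F - s))" using av_diff by metis
    also have "\<dots> < 1"
      using F(3)[OF _ subset_insertI, of i] F(3)[OF F(1) order_refl F(2)] F(1,2) that by auto
    finally show ?thesis unfolding B_def by simp
  qed
  thus ?thesis using that[of B] unfolding B_def by simp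
qed

section \<open>Complete saturated submodules\<close>

definition complete_saturated :: "'a set \<Rightarrow> bool" where
  "complete_saturated M \<longleftrightarrow> M \<subseteq> R0 \<and> 0 \<in> M \<and> (\<forall>x\<in>M. \<forall>y\<in>M. x + y \<in> M \<and> x - y \<in> M) \<and>
     (\<forall>x\<in>M. t * x \<in> M) \<and> (\<forall>x\<in>M. \<forall>n. av x \<le> \<beta> ^ n \<longrightarrow> x \<in> tpow_mod t n M) \<and>
     t_complete t M"

lemma complete_saturatedD:
  assumes "complete_saturated M"
  shows "M \<subseteq> R0" "0 \<in> M" "x \<in> M \<Longrightarrow> y \<in> M \<Longrightarrow> x + y \<in> M" "x \<in> M \<Longrightarrow> y \<in> M \<Longrightarrow> x - y \<in> M"
    "x \<in> M \<Longrightarrow> t * x \<in> M" "x \<in> M \<Longrightarrow> av x \<le> \<beta> ^ n \<Longrightarrow> x \<in> tpow_mod t n M" "t_complete t M"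
  using assms unfolding complete_saturated_def by auto

lemma complete_saturated_tpow_mult:
  "complete_saturated M \<Longrightarrow> x \<in> M \<Longrightarrow> t ^ n * x \<in> M"
  by (induction n) (simp_all add: mult.assoc complete_saturatedD(5))

text \<open>Saturation turns the metric Cauchy condition into the \<open>t\<close>-adic one required by
  \<open>t_complete\<close>.\<close>

lemma complete_saturated_limit:
  assumes "complete_saturated M" "\<And>m. s m \<in> M" "\<And>m. av (s (Suc m) - s m) \<le> \<beta> ^ Suc m"
  obtains x where "x \<in> M" "\<And>m. av (x - s m) \<le> \<beta> ^ Suc m"
proof -
  have "\<forall>m. s m \<in> M \<and> s (Suc m) - s m \<in> tpow_mod t (Suc m) M"
    using complete_saturatedD(4,6)[OF assms(1)] assms(2,3) by simp
  moreover have "\<forall>s. (\<forall>m. s m \<in> M \<and> s (Suc m) - s m \<in> tpow_mod t (Suc m) M) \<longrightarrow>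
      (\<exists>x\<in>M. \<forall>m. x - s m \<in> tpow_mod t (Suc m) M)"
    using complete_saturatedD(7)[OF assms(1)] unfolding t_complete_def by (rule conjunct2)
  ultimately obtain x where x: "x \<in> M" "\<And>m. x - s m \<in> tpow_mod t (Suc m) M"
    by blast
  have "x - s m \<in> tpow_mod t (Suc m) R0" for m
    using x(2)[of m] complete_saturatedD(1)[OF assms(1)] unfolding tpow_mod_def by blast
  thus ?thesis using that x(1) av_le_beta_power_iff by blast
qed

lemma complete_saturated_R0: "complete_saturated R0"
  unfolding complete_saturated_def
  using R0_closed t_in_R0 av_le_beta_power_iff R0_complete by auto

lemma submodule_complete_saturated:
  assumes "submodule T M" "subring T" "t \<in> T" "M \<subseteq> R0" "t_complete t M"
    and saturated: "M \<inter> tpow_mod t 1 R0 = tpow_mod t 1 M"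
  shows "complete_saturated M"
proof -
  have "- 1 \<in> T" using subring_uminus[OF assms(2) subringD(2)[OF assms(2)]] .
  hence diff: "x - y \<in> M" if "x \<in> M" "y \<in> M" for x y
  proof -
    have "x + (- 1) * y \<in> M"
      using assms(1) that \<open>- 1 \<in> T\<close> unfolding submodule_def by blast
    thus ?thesis by simp
  qed
  have "v \<in> tpow_mod t n M" if "v \<in> M" "av v \<le> \<beta> ^ n" for n v
    using that
  proof (induction n arbitrary: v)
    case 0
    have "v = t ^ 0 * v" by simp
    thus ?case using 0 unfolding tpow_mod_def by blast
  next
    case (Suc n)
    have "\<beta> ^ Suc n \<le> \<beta> ^ 1"
      using beta_pos beta_less_1 by (intro power_decreasing) auto
    hence "v \<in> tpow_mod t 1 R0" using Suc.prems(2) av_le_beta_power_iff by fastforce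
    hence "v \<in> tpow_mod t 1 M" using saturated Suc.prems(1) by blast
    then obtain v' where v': "v' \<in> M" "v = t * v'" unfolding tpow_mod_def by auto
    hence "av v' \<le> \<beta> ^ n" using Suc.prems(2) beta_pos by (simp add: av_mult av_t)
    then obtain w where "w \<in> M" "v' = t ^ n * w"
      using Suc.IH v'(1) unfolding tpow_mod_def by auto
    thus "v \<in> tpow_mod t (Suc n) M" using v'(2) unfolding tpow_mod_def by auto
  qed
  thus ?thesis
    using assms diff unfolding complete_saturated_def submodule_def by auto
qed

lemma vecs_in_limit:
  assumes M: "complete_saturated M" and s: "\<And>m. s m \<in> vecs_in M n"
    and cauchy: "\<And>m. vnorm av n (s (Suc m) - s m) \<le> \<beta> ^ Suc m"
  obtains x where "x \<in> vecs_in M n" "\<And>m. vnorm av n (x - s m) \<le> \<beta> ^ Suc m"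
proof -
  have "\<exists>y. i < n \<longrightarrow> y \<in> M \<and> (\<forall>m. av (y - s m i) \<le> \<beta> ^ Suc m)" for i
  proof (cases "i < n")
    case True
    have "av (s (Suc m) i - s m i) \<le> \<beta> ^ Suc m" for m
      using vnorm_coord_le[OF True, of av "s (Suc m) - s m"] cauchy[of m] by simp
    moreover have "s m i \<in> M" for m using s[of m] True unfolding vecs_in_def by blast
    ultimately obtain y where "y \<in> M" "\<And>m. av (y - s m i) \<le> \<beta> ^ Suc m"
      using complete_saturated_limit[OF M, of "\<lambda>m. s m i"] by blast
    thus ?thesis by blast
  qed simp
  then obtain y where y: "\<And>i. i < n \<Longrightarrow> y i \<in> M \<and> (\<forall>m. av (y i - s m i) \<le> \<beta> ^ Suc m)"
    using choice by meson
  define x where "x i = (if i < n then y i else 0)" for i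
  have "x \<in> vecs_in M n" unfolding x_def vecs_in_def vecs_def using y by auto
  moreover have "vnorm av n (x - s m) \<le> \<beta> ^ Suc m" for m
    using y beta_pos unfolding x_def by (intro vnorm_leI) auto
  ultimately show ?thesis using that by blast
qed

lemma vpairs_in_add_diff:
  assumes V: "complete_saturated V" and W: "complete_saturated W"
    and "g \<in> vecs_in V a \<times> vecs_in W b" "h \<in> vecs_in V a \<times> vecs_in W b"
  shows "g + h \<in> vecs_in V a \<times> vecs_in W b" "g - h \<in> vecs_in V a \<times> vecs_in W b"
  using assms(3,4) complete_saturatedD(3,4)[OF V] complete_saturatedD(3,4)[OF W]
  by (auto simp: mem_Times_iff intro: vecs_in_add vecs_in_diff)

lemma vpairs_in_subset_vecs: "vecs_in V a \<times> vecs_in W b \<subseteq> vecs a \<times> vecs b"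
  by (intro Sigma_mono vecs_in_subset_vecs)

lemma vpairs_limit:
  assumes "complete_saturated V" "complete_saturated W"
    and s: "\<And>m. s m \<in> vecs_in V a \<times> vecs_in W b"
    and cauchy: "\<And>m. pnorm av a b (s (Suc m) - s m) \<le> \<beta> ^ Suc m"
  obtains q where "q \<in> vecs_in V a \<times> vecs_in W b" "\<And>m. pnorm av a b (q - s m) \<le> \<beta> ^ Suc m"
proof -
  have cauchy_fst: "vnorm av a (fst (s (Suc m)) - fst (s m)) \<le> \<beta> ^ Suc m"
    and cauchy_snd: "vnorm av b (snd (s (Suc m)) - snd (s m)) \<le> \<beta> ^ Suc m" for m
    using vnorm_fst_le_pnorm[of av a "s (Suc m) - s m" b] vnorm_snd_le_pnorm[of av b "s (Suc m) - s m" a]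
      cauchy[of m] by simp_all
  have s_fst: "fst (s m) \<in> vecs_in V a" and s_snd: "snd (s m) \<in> vecs_in W b" for m
    using s[of m] by auto
  obtain x where x: "x \<in> vecs_in V a" "\<And>m. vnorm av a (x - fst (s m)) \<le> \<beta> ^ Suc m"
    by (rule vecs_in_limit[OF assms(1) s_fst cauchy_fst]) auto
  obtain y where y: "y \<in> vecs_in W b" "\<And>m. vnorm av b (y - snd (s m)) \<le> \<beta> ^ Suc m"
    by (rule vecs_in_limit[OF assms(2) s_snd cauchy_snd]) auto
  show ?thesis
  proof (rule that[of "(x, y)"])
    show "pnorm av a b ((x, y) - s m) \<le> \<beta> ^ Suc m" for m
      using x(2)[of m] y(2)[of m] unfolding pnorm_def by simp
  qed (use x(1) y(1) in simp)
qed

end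

definition unit_midx :: "nat \<Rightarrow> nat \<Rightarrow> nat" where
  "unit_midx i = (\<lambda>j. if j = i then 1 else 0)"

definition mdeg :: "nat \<Rightarrow> (nat \<Rightarrow> nat) \<Rightarrow> nat" where
  "mdeg n m = (\<Sum>i<n. m i)"

definition pmonom :: "nat \<Rightarrow> nat \<Rightarrow> 'a vpair \<Rightarrow> (nat \<Rightarrow> nat) \<times> (nat \<Rightarrow> nat) \<Rightarrow> 'a::comm_ring_1" where
  "pmonom a b h \<mu> = monom a (fst h) (fst \<mu>) * monom b (snd h) (snd \<mu>)"

definition pdeg :: "nat \<Rightarrow> nat \<Rightarrow> (nat \<Rightarrow> nat) \<times> (nat \<Rightarrow> nat) \<Rightarrow> nat" where
  "pdeg a b \<mu> = mdeg a (fst \<mu>) + mdeg b (snd \<mu>)"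

definition linear_midx :: "nat \<Rightarrow> nat \<Rightarrow> ((nat \<Rightarrow> nat) \<times> (nat \<Rightarrow> nat)) set" where
  "linear_midx a b = (\<lambda>i. (unit_midx i, 0)) ` {..<a} \<union> (\<lambda>i. (0, unit_midx i)) ` {..<b}"

lemma monom_0 [simp]: "monom n x 0 = 1"
  unfolding monom_def by simp

lemma monom_unit_midx: "i < n \<Longrightarrow> monom n x (unit_midx i) = x i"
  unfolding monom_def unit_midx_def by (simp add: if_distrib prod.delta cong: if_cong)

lemma mdeg_unit_midx: "i < n \<Longrightarrow> mdeg n (unit_midx i) = 1"
  unfolding mdeg_def unit_midx_def by (simp add: sum.delta)

lemma mdeg_0 [simp]: "mdeg n 0 = 0"
  unfolding mdeg_def by simp

lemma mdeg_eq_0_iff: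
  assumes "m \<in> midx n"
  shows "mdeg n m = 0 \<longleftrightarrow> m = 0"
proof
  assume "mdeg n m = 0"
  show "m = 0"
  proof
    fix i show "m i = 0 i"
      using \<open>mdeg n m = 0\<close> assms unfolding mdeg_def midx_def by (cases "i < n") auto
  qed
qed simp

lemma mdeg_eq_1D:
  assumes "m \<in> midx n" "mdeg n m = 1"
  obtains i where "i < n" "m = unit_midx i"
proof -
  obtain i where i: "i < n" "m i \<noteq> 0"
    using assms(2) unfolding mdeg_def by (metis lessThan_iff one_neq_zero sum.neutral)
  have "m i + (\<Sum>j\<in>{..<n} - {i}. m j) = 1"
    using assms(2) i(1) unfolding mdeg_def by (metis finite_lessThan lessThan_iff sum.remove)
  hence "m i = 1" "(\<Sum>j\<in>{..<n} - {i}. m j) = 0" using i(2) by linarith+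
  hence "m i = 1" "\<forall>j\<in>{..<n} - {i}. m j = 0" by simp_all
  have "m = unit_midx i"
  proof
    fix j show "m j = unit_midx i j"
      using \<open>m i = 1\<close> \<open>\<forall>j\<in>{..<n} - {i}. m j = 0\<close> assms(1)
      unfolding midx_def unit_midx_def by (cases "j < n") auto
  qed
  thus ?thesis using that i(1) by blast
qed

lemma finite_linear_midx: "finite (linear_midx a b)"
  unfolding linear_midx_def by simp

lemma linear_midx_subset: "linear_midx a b \<subseteq> midx a \<times> midx b"
  unfolding linear_midx_def midx_def unit_midx_def by auto

lemma pdeg_linear_midx: "\<mu> \<in> linear_midx a b \<Longrightarrow> pdeg a b \<mu> = 1"
  unfolding linear_midx_def pdeg_def by (auto simp: mdeg_unit_midx)

lemma pdeg_eq_1_imp_linear_midx: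
  assumes "\<mu> \<in> midx a \<times> midx b" "pdeg a b \<mu> = 1"
  shows "\<mu> \<in> linear_midx a b"
proof (cases "mdeg a (fst \<mu>) = 1")
  case True
  hence "mdeg b (snd \<mu>) = 0" using assms(2) unfolding pdeg_def by simp
  hence "snd \<mu> = 0" using mdeg_eq_0_iff assms(1) by auto
  moreover obtain i where "i < a" "fst \<mu> = unit_midx i"
    by (rule mdeg_eq_1D[of "fst \<mu>" a]) (use True assms(1) in auto)
  ultimately show ?thesis unfolding linear_midx_def by (metis UnI1 image_eqI lessThan_iff prod.collapse)
next
  case False
  hence "mdeg a (fst \<mu>) = 0" "mdeg b (snd \<mu>) = 1" using assms(2) unfolding pdeg_def by auto
  moreover obtain i where "i < b" "snd \<mu> = unit_midx i"
    by (rule mdeg_eq_1D[of "snd \<mu>" b]) (use calculation assms(1) in auto)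
  ultimately show ?thesis
    using mdeg_eq_0_iff assms(1) unfolding linear_midx_def by (metis UnI2 image_eqI lessThan_iff mem_Times_iff prod.collapse)
qed

lemma pmonom_pdeg_0:
  "\<mu> \<in> midx a \<times> midx b \<Longrightarrow> pdeg a b \<mu> = 0 \<Longrightarrow> pmonom a b h \<mu> = 1"
  unfolding pdeg_def pmonom_def using mdeg_eq_0_iff by (cases \<mu>) auto

lemma pmonom_linear_add:
  "\<mu> \<in> linear_midx a b \<Longrightarrow> pmonom a b (g + h) \<mu> = pmonom a b g \<mu> + pmonom a b h \<mu>"
  unfolding linear_midx_def pmonom_def by (auto simp: monom_unit_midx)

lemma pmonom_linear_pscale:
  "\<mu> \<in> linear_midx a b \<Longrightarrow> pmonom a b (pscale z h) \<mu> = z * pmonom a b h \<mu>"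
  unfolding linear_midx_def pmonom_def by (auto simp: monom_unit_midx)

lemma pmonom_const:
  "pmonom a b (\<lambda>i. if i < a then c else 0, \<lambda>i. if i < b then c else 0) \<mu> = c ^ pdeg a b \<mu>"
  unfolding pmonom_def pdeg_def mdeg_def monom_def by (simp add: power_sum power_add)

context discretely_valued
begin

lemma av_monom_le:
  assumes "\<rho> \<ge> 0" "\<And>i. i < n \<Longrightarrow> av (x i) \<le> \<rho>"
  shows "av (monom n x m) \<le> \<rho> ^ mdeg n m"
proof -
  have "av (monom n x m) = (\<Prod>i<n. av (x i) ^ m i)"
    unfolding monom_def by (simp add: av_prod av_power)
  also have "\<dots> \<le> (\<Prod>i<n. \<rho> ^ m i)"
    by (intro prod_mono) (auto intro: power_mono assms)
  finally show ?thesis by (simp add: power_sum mdeg_def)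
qed

text \<open>Difference estimates are stated as \<open>\<rho> * av (\<dots>) \<le> \<rho> ^ d * \<delta>\<close>, which is the
  familiar bound \<open>d \<rho>\<^sup>d\<^sup>-\<^sup>1 \<delta>\<close> without the factor \<open>d\<close> (ultrametric) and without a
  negative exponent when \<open>d = 0\<close>.\<close>

lemma av_mult_diff_le:
  assumes "\<rho> \<ge> 0" "\<delta> \<ge> 0"
    and "av P \<le> \<rho> ^ d1" "av Q \<le> \<rho> ^ d1" "\<rho> * av (P - Q) \<le> \<rho> ^ d1 * \<delta>"
    and "av p \<le> \<rho> ^ d2" "av q \<le> \<rho> ^ d2" "\<rho> * av (p - q) \<le> \<rho> ^ d2 * \<delta>"
  shows "\<rho> * av (P * p - Q * q) \<le> \<rho> ^ (d1 + d2) * \<delta>"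
proof -
  have "P * p - Q * q = P * (p - q) + (P - Q) * q" by (simp add: algebra_simps)
  hence "av (P * p - Q * q) \<le> max (av P * av (p - q)) (av (P - Q) * av q)"
    using av_add[of "P * (p - q)" "(P - Q) * q"] by (simp add: av_mult)
  hence "\<rho> * av (P * p - Q * q) \<le> \<rho> * max (av P * av (p - q)) (av (P - Q) * av q)"
    using assms(1) by (rule mult_left_mono)
  also have "\<dots> = max (av P * (\<rho> * av (p - q))) ((\<rho> * av (P - Q)) * av q)"
    using assms(1) by (simp add: max_mult_distrib_left mult_ac)
  also have "\<dots> \<le> \<rho> ^ (d1 + d2) * \<delta>"
  proof (rule max.boundedI)
    have "av P * (\<rho> * av (p - q)) \<le> \<rho> ^ d1 * (\<rho> ^ d2 * \<delta>)"
      by (rule mult_mono) (use assms in auto)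
    thus "av P * (\<rho> * av (p - q)) \<le> \<rho> ^ (d1 + d2) * \<delta>" by (simp add: power_add mult_ac)
    have "(\<rho> * av (P - Q)) * av q \<le> (\<rho> ^ d1 * \<delta>) * \<rho> ^ d2"
      by (rule mult_mono) (use assms in auto)
    thus "(\<rho> * av (P - Q)) * av q \<le> \<rho> ^ (d1 + d2) * \<delta>" by (simp add: power_add mult_ac)
  qed
  finally show ?thesis .
qed

lemma av_power_diff_le:
  assumes "\<rho> \<ge> 0" "\<delta> \<ge> 0" "av x \<le> \<rho>" "av y \<le> \<rho>" "av (x - y) \<le> \<delta>"
  shows "\<rho> * av (x ^ k - y ^ k) \<le> \<rho> ^ k * \<delta>"
proof (induction k)
  case (Suc k)
  have "\<rho> * av (x ^ k * x - y ^ k * y) \<le> \<rho> ^ (k + 1) * \<delta>"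
    using assms Suc by (intro av_mult_diff_le) (auto simp: av_power mult_left_mono intro: power_mono)
  thus ?case by (simp add: mult_ac)
qed (use assms in simp)

lemma av_monom_diff_le:
  assumes "\<rho> \<ge> 0" "\<delta> \<ge> 0" "\<And>i. i < n \<Longrightarrow> av (x i) \<le> \<rho>" "\<And>i. i < n \<Longrightarrow> av (y i) \<le> \<rho>"
    "\<And>i. i < n \<Longrightarrow> av (x i - y i) \<le> \<delta>"
  shows "\<rho> * av (monom n x m - monom n y m) \<le> \<rho> ^ mdeg n m * \<delta>"
  using assms(3-)
proof (induction n)
  case 0
  thus ?case using assms by (simp add: monom_def mdeg_def)
next
  case (Suc n)
  have "\<rho> * av (monom n x m * x n ^ m n - monom n y m * y n ^ m n) \<le> \<rho> ^ (mdeg n m + m n) * \<delta>"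
    using Suc assms(1,2)
    by (intro av_mult_diff_le av_monom_le av_power_diff_le) (auto simp: av_power intro: power_mono)
  thus ?case by (simp add: monom_def mdeg_def add.commute)
qed

lemma av_pmonom_linear_le:
  "\<mu> \<in> linear_midx a b \<Longrightarrow> av (pmonom a b h \<mu>) \<le> pnorm av a b h"
  unfolding linear_midx_def pmonom_def
  by (auto simp: monom_unit_midx pnorm_fst_coord_le pnorm_snd_coord_le)

lemma av_pmonom_diff_le:
  assumes "pnorm av a b h \<le> \<rho>" "pnorm av a b h' \<le> \<rho>"
  shows "\<rho> * av (pmonom a b h' \<mu> - pmonom a b h \<mu>) \<le> \<rho> ^ pdeg a b \<mu> * pnorm av a b (h' - h)"
proof -
  have \<rho>: "\<rho> \<ge> 0" using assms(1) pnorm_nonneg[of av a b h] by linarith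
  have fst_le: "av (fst g i) \<le> r" if "pnorm av a b g \<le> r" "i < a" for g r i
    using pnorm_fst_coord_le[OF that(2), where h=g and b=b and av=av] that(1) by simp
  have snd_le: "av (snd g j) \<le> r" if "pnorm av a b g \<le> r" "j < b" for g r j
    using pnorm_snd_coord_le[OF that(2), where h=g and a=a and av=av] that(1) by simp
  show ?thesis
    unfolding pmonom_def pdeg_def
    by (intro av_mult_diff_le av_monom_le av_monom_diff_le \<rho> pnorm_nonneg)
      (use fst_le[OF assms(1)] fst_le[OF assms(2)] fst_le[OF order_refl, where g="h' - h"]
        snd_le[OF assms(1)] snd_le[OF assms(2)] snd_le[OF order_refl, where g="h' - h"] in auto)
qed

end

section \<open>Linearization of analytic maps\<close>

definition pair_linear :: "nat \<Rightarrow> ('a::field vpair \<Rightarrow> 'a vec) \<Rightarrow> bool" where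
  "pair_linear c L \<longleftrightarrow> (\<forall>h. L h \<in> vecs c) \<and> additive L \<and> (\<forall>z h. L (pscale z h) = vscale z (L h))"

lemma pair_linearD:
  assumes "pair_linear c L"
  shows "L h \<in> vecs c" "L (g + h) = L g + L h" "L (g - h) = L g - L h" "L 0 = 0"
    "L (pscale z h) = vscale z (L h)"
  using assms additive.add additive.diff additive.zero unfolding pair_linear_def by blast+

definition linear_part ::
  "nat \<Rightarrow> nat \<Rightarrow> nat \<Rightarrow> (nat \<Rightarrow> (nat \<Rightarrow> nat) \<times> (nat \<Rightarrow> nat) \<Rightarrow> 'a::field) \<Rightarrow> 'a vpair \<Rightarrow> 'a vec" where
  "linear_part a b c C h = (\<lambda>k. if k < c then \<Sum>\<mu>\<in>linear_midx a b. C k \<mu> * pmonom a b h \<mu> else 0)"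

lemma pair_linear_linear_part: "pair_linear c (linear_part a b c C)"
proof -
  have "additive (linear_part a b c C)"
    by unfold_locales
      (simp add: linear_part_def fun_eq_iff pmonom_linear_add distrib_left sum.distrib cong: sum.cong)
  moreover have "linear_part a b c C (pscale z h) = vscale z (linear_part a b c C h)" for z h
    by (simp add: linear_part_def fun_eq_iff pmonom_linear_pscale sum_distrib_left mult.left_commute
        cong: sum.cong)
  ultimately show ?thesis unfolding pair_linear_def linear_part_def vecs_def by simp
qed

lemma linear_part_diff:
  "k < c \<Longrightarrow> linear_part a b c C q' k - linear_part a b c C q k =
    (\<Sum>\<mu>\<in>linear_midx a b. C k \<mu> * (pmonom a b q' \<mu> - pmonom a b q \<mu>))"
  unfolding linear_part_def by (simp add: sum_subtractf right_diff_distrib)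

lemma finite_family_bounded:
  fixes P :: "nat \<Rightarrow> 'b \<Rightarrow> real"
  assumes "\<And>k. k < c \<Longrightarrow> \<exists>B. \<forall>x\<in>S. P k x \<le> B"
  shows "\<exists>B\<ge>0. \<forall>k<c. \<forall>x\<in>S. P k x \<le> B"
proof -
  have "\<forall>k. \<exists>B. k < c \<longrightarrow> (\<forall>x\<in>S. P k x \<le> B)" using assms by blast
  from choice[OF this] obtain Bf where Bf: "\<And>k x. k < c \<Longrightarrow> x \<in> S \<Longrightarrow> P k x \<le> Bf k"
    by blast
  have "P k x \<le> (\<Sum>j<c. max 0 (Bf j))" if "k < c" "x \<in> S" for k x
  proof -
    have "P k x \<le> max 0 (Bf k)" using Bf[OF that] by simp
    also have "\<dots> \<le> (\<Sum>j<c. max 0 (Bf j))" using that(1) by (intro member_le_sum) auto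
    finally show ?thesis .
  qed
  moreover have "(\<Sum>j<c. max 0 (Bf j)) \<ge> 0" by (intro sum_nonneg) simp
  ultimately show ?thesis by blast
qed

context discretely_valued
begin

text \<open>Cauchy's estimate: the terms of the series converging at the point with all coordinates
  \<open>t\<^sup>s\<close> are bounded.\<close>

lemma cauchy_coefficient_bound:
  fixes c :: nat
  assumes "\<And>k. k < c \<Longrightarrow> has_usum av (\<lambda>\<mu>. C k \<mu> *
      pmonom a b (\<lambda>i. if i < a then t ^ s else 0, \<lambda>i. if i < b then t ^ s else 0) \<mu>) I (y k)"
  shows "\<exists>B\<ge>0. \<forall>k<c. \<forall>\<mu>\<in>I. av (C k \<mu>) * \<beta> ^ (s * pdeg a b \<mu>) \<le> B"
proof -
  have "\<exists>B. \<forall>\<mu>\<in>I. av (C k \<mu>) * \<beta> ^ (s * pdeg a b \<mu>) \<le> B" if kc: "k < c" for k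
  proof -
    obtain B where "B \<ge> 0" and B: "\<And>\<mu>. \<mu> \<in> I \<Longrightarrow>
        av (C k \<mu> * pmonom a b (\<lambda>i. if i < a then t ^ s else 0, \<lambda>i. if i < b then t ^ s else 0) \<mu>) \<le> B"
      by (rule has_usum_terms_bounded[OF assms[OF kc]]) blast
    hence "\<forall>\<mu>\<in>I. av (C k \<mu>) * \<beta> ^ (s * pdeg a b \<mu>) \<le> B"
      by (simp add: pmonom_const av_mult av_power av_t power_mult)
    thus ?thesis by blast
  qed
  thus ?thesis
    by (rule finite_family_bounded[where P = "\<lambda>k \<mu>. av (C k \<mu>) * \<beta> ^ (s * pdeg a b \<mu>)"])
qed

lemma vnorm_linear_part_le:
  assumes "B \<ge> 0" "\<And>k \<mu>. k < c \<Longrightarrow> \<mu> \<in> linear_midx a b \<Longrightarrow> av (C k \<mu>) * \<beta> ^ s \<le> B"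
  shows "vnorm av c (linear_part a b c C h) \<le> B / \<beta> ^ s * pnorm av a b h"
proof (rule vnorm_leI)
  show "0 \<le> B / \<beta> ^ s * pnorm av a b h"
    using assms(1) beta_pos by (intro mult_nonneg_nonneg divide_nonneg_pos pnorm_nonneg zero_less_power)
  fix k assume "k < c"
  have "av (C k \<mu> * pmonom a b h \<mu>) \<le> B / \<beta> ^ s * pnorm av a b h" if "\<mu> \<in> linear_midx a b" for \<mu>
  proof -
    have "av (C k \<mu>) \<le> B / \<beta> ^ s"
      using assms(2)[OF \<open>k < c\<close> that] beta_pos by (simp add: field_simps)
    thus ?thesis unfolding av_mult
      using av_pmonom_linear_le[OF that] assms(1) beta_pos
      by (intro mult_mono) (auto simp: divide_nonneg_pos)
  qed
  thus "av (linear_part a b c C h k) \<le> B / \<beta> ^ s * pnorm av a b h"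
    unfolding linear_part_def using \<open>k < c\<close> assms(1) beta_pos pnorm_nonneg[of av a b h]
    by (simp add: av_sum_le finite_linear_midx)
qed

lemma av_high_degree_term_le:
  assumes "0 < \<rho>" "\<rho> \<le> \<beta> ^ s" "\<delta> \<ge> 0" "2 \<le> d"
    and "\<rho> * av \<Delta> \<le> \<rho> ^ d * \<delta>" and "av C * \<beta> ^ (s * d) \<le> B"
  shows "av (C * \<Delta>) \<le> B / \<beta> ^ (2 * s) * \<rho> * \<delta>"
proof -
  obtain e where d: "d = e + 2" using assms(4) by (metis add.commute le_Suc_ex)
  have "\<rho> * av \<Delta> \<le> \<rho> * (\<rho> ^ (e + 1) * \<delta>)" using assms(5) d by (simp add: mult_ac)
  hence "av \<Delta> \<le> \<rho> ^ (e + 1) * \<delta>" using assms(1) by simp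
  also have "\<dots> \<le> \<rho> * \<beta> ^ (s * e) * \<delta>"
  proof -
    have "\<rho> ^ e \<le> (\<beta> ^ s) ^ e" using assms(1,2) by (intro power_mono) auto
    hence "\<rho> * \<rho> ^ e * \<delta> \<le> \<rho> * (\<beta> ^ s) ^ e * \<delta>"
      using assms(1,3) by (intro mult_right_mono mult_left_mono) auto
    thus ?thesis by (simp add: power_mult)
  qed
  finally have "av (C * \<Delta>) \<le> av C * (\<rho> * \<beta> ^ (s * e) * \<delta>)"
    unfolding av_mult by (rule mult_left_mono) simp
  also have "\<dots> = (av C * \<beta> ^ (s * d)) * \<rho> * \<delta> / \<beta> ^ (2 * s)"
  proof -
    have "s * d = s * e + 2 * s" unfolding d by (simp add: algebra_simps)
    hence "\<beta> ^ (s * d) = \<beta> ^ (s * e) * \<beta> ^ (2 * s)" by (simp only: power_add)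
    thus ?thesis using beta_pos by (simp add: field_simps)
  qed
  also have "\<dots> \<le> B * \<rho> * \<delta> / \<beta> ^ (2 * s)"
    using assms beta_pos by (intro divide_right_mono mult_right_mono) auto
  finally show ?thesis by simp
qed

lemma remainder_term_le:
  assumes \<mu>: "\<mu> \<in> midx a \<times> midx b" "\<mu> \<notin> linear_midx a b"
    and C: "av C * \<beta> ^ (s * pdeg a b \<mu>) \<le> B" "B \<ge> 0"
    and \<rho>: "0 < \<rho>" "\<rho> \<le> \<beta> ^ s" "pnorm av a b q \<le> \<rho>" "pnorm av a b q' \<le> \<rho>"
  shows "av (C * (pmonom a b q' \<mu> - pmonom a b q \<mu>)) \<le> B / \<beta> ^ (2 * s) * \<rho> * pnorm av a b (q' - q)"
proof (cases "pdeg a b \<mu> = 0")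
  case True
  thus ?thesis
    using pmonom_pdeg_0[OF \<mu>(1), of q] pmonom_pdeg_0[OF \<mu>(1), of q'] C(2) \<rho>(1) beta_pos
      pnorm_nonneg[of av a b "q' - q"]
    by (simp add: divide_nonneg_pos)
next
  case False
  moreover have "pdeg a b \<mu> \<noteq> 1" using pdeg_eq_1_imp_linear_midx \<mu> by blast
  ultimately have "2 \<le> pdeg a b \<mu>" by simp
  from av_high_degree_term_le[OF \<rho>(1,2) pnorm_nonneg this _ C(1)]
  show ?thesis using av_pmonom_diff_le[OF \<rho>(3,4)] by blast
qed

lemma series_remainder_le:
  assumes y': "has_usum av (\<lambda>\<mu>. C \<mu> * pmonom a b q' \<mu>) (midx a \<times> midx b) y'"
    and y: "has_usum av (\<lambda>\<mu>. C \<mu> * pmonom a b q \<mu>) (midx a \<times> midx b) y"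
    and C: "\<And>\<mu>. \<mu> \<in> midx a \<times> midx b \<Longrightarrow> av (C \<mu>) * \<beta> ^ (s * pdeg a b \<mu>) \<le> B" "B \<ge> 0"
    and \<rho>: "0 < \<rho>" "\<rho> \<le> \<beta> ^ s" "pnorm av a b q \<le> \<rho>" "pnorm av a b q' \<le> \<rho>"
  shows "av (y' - y - (\<Sum>\<mu>\<in>linear_midx a b. C \<mu> * (pmonom a b q' \<mu> - pmonom a b q \<mu>)))
    \<le> B / \<beta> ^ (2 * s) * \<rho> * pnorm av a b (q' - q)"
proof -
  define I where "I = midx a \<times> midx b"
  define \<Delta> where "\<Delta> \<mu> = C \<mu> * (pmonom a b q' \<mu> - pmonom a b q \<mu>)" for \<mu>
  define lin where "lin \<mu> = (if \<mu> \<in> linear_midx a b then \<Delta> \<mu> else 0)" for \<mu>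
  let ?bound = "B / \<beta> ^ (2 * s) * \<rho> * pnorm av a b (q' - q)"
  have bound_nonneg: "?bound \<ge> 0"
    using C(2) \<rho>(1) beta_pos pnorm_nonneg[of av a b "q' - q"]
    by (intro mult_nonneg_nonneg divide_nonneg_pos) auto
  have "has_usum av lin I (sum lin (linear_midx a b))"
    using finite_linear_midx linear_midx_subset unfolding I_def lin_def
    by (intro has_usum_finite_support) auto
  moreover have "sum lin (linear_midx a b) = (\<Sum>\<mu>\<in>linear_midx a b. \<Delta> \<mu>)"
    unfolding lin_def by simp
  ultimately have "has_usum av (\<lambda>\<mu>. (C \<mu> * pmonom a b q' \<mu> - C \<mu> * pmonom a b q \<mu>) - lin \<mu>) I
      (y' - y - (\<Sum>\<mu>\<in>linear_midx a b. \<Delta> \<mu>))"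
    using has_usum_diff[OF has_usum_diff[OF y' y]] unfolding I_def by simp
  moreover have "av ((C \<mu> * pmonom a b q' \<mu> - C \<mu> * pmonom a b q \<mu>) - lin \<mu>) \<le> ?bound"
    if "\<mu> \<in> I" for \<mu>
    using remainder_term_le[of \<mu> a b "C \<mu>" s B \<rho> q q'] that C \<rho> bound_nonneg
    unfolding lin_def \<Delta>_def I_def by (simp add: right_diff_distrib)
  ultimately have "av (y' - y - (\<Sum>\<mu>\<in>linear_midx a b. \<Delta> \<mu>)) \<le> ?bound"
    by (rule has_usum_av_le[OF _ bound_nonneg])
  thus ?thesis unfolding \<Delta>_def .
qed

lemma power_series_near_0:
  assumes \<Omega>_open: "open_in_prod av a b \<Omega>" and \<Omega>_0: "(zvec, zvec) \<in> \<Omega>"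
    and f_analytic: "analytic_on_prod av a b c \<Omega> f"
  obtains s and C :: "nat \<Rightarrow> (nat \<Rightarrow> nat) \<times> (nat \<Rightarrow> nat) \<Rightarrow> 'a"
  where "\<And>q. q \<in> vecs a \<times> vecs b \<Longrightarrow> pnorm av a b q \<le> \<beta> ^ s \<Longrightarrow> q \<in> \<Omega>"
    and "\<And>q k. q \<in> vecs a \<times> vecs b \<Longrightarrow> pnorm av a b q \<le> \<beta> ^ s \<Longrightarrow> k < c \<Longrightarrow>
      has_usum av (\<lambda>\<mu>. C k \<mu> * pmonom a b q \<mu>) (midx a \<times> midx b) (case_prod f q k)"
proof -
  have "\<forall>p\<in>\<Omega>. \<exists>r>0. \<exists>C :: nat \<Rightarrow> (nat \<Rightarrow> nat) \<Rightarrow> (nat \<Rightarrow> nat) \<Rightarrow> 'a. \<forall>q\<in>\<Omega>.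
      pnorm av a b (vdiff (fst q) (fst p), vdiff (snd q) (snd p)) < r \<longrightarrow>
      (\<forall>k<c. has_usum av (\<lambda>(m, m'). C k m m' * monom a (vdiff (fst q) (fst p)) m *
        monom b (vdiff (snd q) (snd p)) m') (midx a \<times> midx b) (f (fst q) (snd q) k))"
    using f_analytic unfolding analytic_on_prod_def by (rule conjunct2)
  from bspec[OF this \<Omega>_0] obtain r and C :: "nat \<Rightarrow> (nat \<Rightarrow> nat) \<Rightarrow> (nat \<Rightarrow> nat) \<Rightarrow> 'a"
    where r: "r > 0" and rC: "\<forall>q\<in>\<Omega>. pnorm av a b q < r \<longrightarrow> (\<forall>k<c. has_usum av
      (\<lambda>(m, m'). C k m m' * monom a (fst q) m * monom b (snd q) m') (midx a \<times> midx b) (f (fst q) (snd q) k))"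
    by auto
  have expand: "(\<lambda>(m, m'). C k m m' * monom a (fst q) m * monom b (snd q) m') =
      (\<lambda>\<mu>. C k (fst \<mu>) (snd \<mu>) * pmonom a b q \<mu>)" for k q
    by (simp add: fun_eq_iff pmonom_def mult.assoc)
  have "\<forall>p\<in>\<Omega>. \<exists>r>0. \<forall>q\<in>vecs a \<times> vecs b.
      pnorm av a b (vdiff (fst q) (fst p), vdiff (snd q) (snd p)) < r \<longrightarrow> q \<in> \<Omega>"
    using \<Omega>_open unfolding open_in_prod_def by (rule conjunct2)
  from bspec[OF this \<Omega>_0] obtain r' where r': "r' > 0"
    "\<forall>q\<in>vecs a \<times> vecs b. pnorm av a b q < r' \<longrightarrow> q \<in> \<Omega>"
    by auto
  obtain s where s: "\<beta> ^ s < min r r'" using beta_power_small[of "min r r'"] r r' by auto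
  show ?thesis
  proof (rule that[of s "\<lambda>k \<mu>. C k (fst \<mu>) (snd \<mu>)"])
    show in_\<Omega>: "q \<in> \<Omega>" if "q \<in> vecs a \<times> vecs b" "pnorm av a b q \<le> \<beta> ^ s" for q
      using that s r'(2) by auto
    show "has_usum av (\<lambda>\<mu>. C k (fst \<mu>) (snd \<mu>) * pmonom a b q \<mu>) (midx a \<times> midx b) (case_prod f q k)"
      if "q \<in> vecs a \<times> vecs b" "pnorm av a b q \<le> \<beta> ^ s" "k < c" for q k
      using rC in_\<Omega>[OF that(1,2)] that(2,3) s unfolding expand by (simp add: split_beta)
  qed
qed

end

locale linearized = discretely_valued R0 t \<alpha> for R0 :: "'a::field set" and t \<alpha> +
  fixes a b c :: nat and \<Omega> :: "'a vpair set" and f :: "'a vec \<Rightarrow> 'a vec \<Rightarrow> 'a vec"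
    and L :: "'a vpair \<Rightarrow> 'a vec" and \<rho>0 \<kappa> \<Lambda> :: real
  assumes L_linear: "pair_linear c L"
    and L_bound: "vnorm av c (L h) \<le> \<Lambda> * pnorm av a b h"
    and \<rho>0_pos: "\<rho>0 > 0" and \<kappa>_nonneg: "\<kappa> \<ge> 0" and \<Lambda>_nonneg: "\<Lambda> \<ge> 0"
    and ball_subset: "q \<in> vecs a \<times> vecs b \<Longrightarrow> pnorm av a b q \<le> \<rho>0 \<Longrightarrow> q \<in> \<Omega>"
    and f_vecs: "q \<in> \<Omega> \<Longrightarrow> case_prod f q \<in> vecs c"
    and remainder_le: "0 < \<rho> \<Longrightarrow> \<rho> \<le> \<rho>0 \<Longrightarrow> q \<in> vecs a \<times> vecs b \<Longrightarrow> q' \<in> vecs a \<times> vecs b \<Longrightarrow>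
      pnorm av a b q \<le> \<rho> \<Longrightarrow> pnorm av a b q' \<le> \<rho> \<Longrightarrow>
      vnorm av c (case_prod f q' - case_prod f q - (L q' - L q)) \<le> \<kappa> * \<rho> * pnorm av a b (q' - q)"

text \<open>The linearization of an analytic map at the origin is the degree-one part of its power
  series; the bounds come from Cauchy's estimate for the coefficients.\<close>

lemma (in discretely_valued) analytic_linearization:
  assumes "open_in_prod av a b \<Omega>" "(zvec, zvec) \<in> \<Omega>" and f_analytic: "analytic_on_prod av a b c \<Omega> f"
  obtains L \<rho>0 \<kappa> \<Lambda> where "linearized R0 t \<alpha> a b c \<Omega> f L \<rho>0 \<kappa> \<Lambda>"
proof -
  obtain s C where in_\<Omega>: "\<And>q. q \<in> vecs a \<times> vecs b \<Longrightarrow> pnorm av a b q \<le> \<beta> ^ s \<Longrightarrow> q \<in> \<Omega>"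
    and series: "\<And>q k. q \<in> vecs a \<times> vecs b \<Longrightarrow> pnorm av a b q \<le> \<beta> ^ s \<Longrightarrow> k < c \<Longrightarrow>
      has_usum av (\<lambda>\<mu>. C k \<mu> * pmonom a b q \<mu>) (midx a \<times> midx b) (case_prod f q k)"
    by (rule power_series_near_0[OF assms]) blast
  define q\<^sub>s :: "'a vpair" where "q\<^sub>s = (\<lambda>i. if i < a then t ^ s else 0, \<lambda>i. if i < b then t ^ s else 0)"
  have "q\<^sub>s \<in> vecs a \<times> vecs b" "pnorm av a b q\<^sub>s \<le> \<beta> ^ s"
    unfolding q\<^sub>s_def vecs_def pnorm_def using beta_pos by (auto simp: vnorm_le_iff av_tpow)
  from series[OF this, unfolded q\<^sub>s_def]
  have "\<exists>B\<ge>0. \<forall>k<c. \<forall>\<mu>\<in>midx a \<times> midx b. av (C k \<mu>) * \<beta> ^ (s * pdeg a b \<mu>) \<le> B"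
    by (rule cauchy_coefficient_bound)
  then obtain B where B: "B \<ge> 0"
    "\<And>k \<mu>. k < c \<Longrightarrow> \<mu> \<in> midx a \<times> midx b \<Longrightarrow> av (C k \<mu>) * \<beta> ^ (s * pdeg a b \<mu>) \<le> B"
    by blast
  define L where "L = linear_part a b c C"
  have "av (C k \<mu>) * \<beta> ^ s \<le> B" if "k < c" "\<mu> \<in> linear_midx a b" for k \<mu>
    using B(2)[OF that(1), of \<mu>] linear_midx_subset that(2) pdeg_linear_midx[OF that(2)] by auto
  hence L_bound: "vnorm av c (L h) \<le> B / \<beta> ^ s * pnorm av a b h" for h
    unfolding L_def by (rule vnorm_linear_part_le[OF B(1)])
  have remainder: "vnorm av c (case_prod f q' - case_prod f q - (L q' - L q))
      \<le> B / \<beta> ^ (2 * s) * \<rho> * pnorm av a b (q' - q)"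
    if "0 < \<rho>" "\<rho> \<le> \<beta> ^ s" "q \<in> vecs a \<times> vecs b" "q' \<in> vecs a \<times> vecs b"
      "pnorm av a b q \<le> \<rho>" "pnorm av a b q' \<le> \<rho>" for \<rho> q q'
  proof (rule vnorm_leI)
    show "0 \<le> B / \<beta> ^ (2 * s) * \<rho> * pnorm av a b (q' - q)"
      using B(1) beta_pos that(1)
      by (intro mult_nonneg_nonneg divide_nonneg_pos pnorm_nonneg zero_less_power) auto
    fix k assume "k < c"
    have "av (case_prod f q' k - case_prod f q k - (L q' k - L q k))
        \<le> B / \<beta> ^ (2 * s) * \<rho> * pnorm av a b (q' - q)"
      unfolding L_def linear_part_diff[OF \<open>k < c\<close>]
      using that \<open>k < c\<close> series[of q k] series[of q' k] B order_trans
      by (intro series_remainder_le[where C = "C k"]) auto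
    thus "av ((case_prod f q' - case_prod f q - (L q' - L q)) k) \<le> B / \<beta> ^ (2 * s) * \<rho> * pnorm av a b (q' - q)"
      by simp
  qed
  have "linearized R0 t \<alpha> a b c \<Omega> f L (\<beta> ^ s) (B / \<beta> ^ (2 * s)) (B / \<beta> ^ s)"
  proof (intro linearized.intro linearized_axioms.intro)
    show "discretely_valued R0 t \<alpha>" by (rule discretely_valued_axioms)
    show "\<beta> ^ s > 0" "B / \<beta> ^ (2 * s) \<ge> 0" "B / \<beta> ^ s \<ge> 0"
      using B(1) beta_pos by (simp_all add: divide_nonneg_pos)
    show "q \<in> \<Omega> \<Longrightarrow> case_prod f q \<in> vecs c" for q
      using f_analytic unfolding analytic_on_prod_def by (simp add: split_beta)
  qed (use pair_linear_linear_part L_bound in_\<Omega> remainder in \<open>auto simp: L_def\<close>)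
  thus ?thesis by (rule that)
qed

section \<open>Uniqueness of differentials\<close>

context discretely_valued
begin

lemma lin_map_vscale_diff:
  "lin_map n m L \<Longrightarrow> lin_map n m G \<Longrightarrow> x \<in> vecs n \<Longrightarrow>
    L (vscale z x) k - G (vscale z x) k = z * (L x k - G x k)"
  unfolding lin_map_def vscale_def by (simp add: right_diff_distrib)

text \<open>Scaling \<open>x\<close> by \<open>t\<^sup>j\<close> makes the quadratic error of \<open>G\<close> negligible against the linear
  error of the differential \<open>L\<close>.\<close>

lemma has_diff0_close:
  assumes L: "has_diff0 av n m D g L" and G: "lin_map n m G" and "\<rho>0 > 0" "\<kappa> \<ge> 0"
    and quadratic: "\<And>x. x \<in> vecs n \<Longrightarrow> vnorm av n x \<le> \<rho>0 \<Longrightarrow>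
      x \<in> D \<and> vnorm av m (\<lambda>k. g x k - g zvec k - G x k) \<le> \<kappa> * vnorm av n x ^ 2"
    and x: "x \<in> vecs n" and "k < m" "\<epsilon> > 0"
  shows "av (L x k - G x k) \<le> \<epsilon>"
proof -
  have L_lin: "lin_map n m L" using L unfolding has_diff0_def by blast
  define N where "N = vnorm av n x"
  define K where "K = (\<kappa> + 1) * (N + 1) ^ 2"
  have N: "N \<ge> 0" unfolding N_def by (rule vnorm_nonneg)
  have "N + 1 \<le> (N + 1) ^ 2" using N by (simp add: power2_eq_square)
  hence K: "N + 1 \<le> K" "\<kappa> * N ^ 2 \<le> K"
    using N \<open>\<kappa> \<ge> 0\<close> mult_mono[of 1 "\<kappa> + 1" "N + 1" "(N + 1) ^ 2"]
      mult_mono[of \<kappa> "\<kappa> + 1" "N ^ 2" "(N + 1) ^ 2"] power_mono[of N "N + 1" 2]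
    unfolding K_def by simp_all
  have "\<epsilon> / (N + 1) > 0" using \<open>\<epsilon> > 0\<close> N by simp
  then obtain \<delta> where "\<delta> > 0" and \<delta>: "\<And>y. y \<in> vecs n \<Longrightarrow> y \<in> D \<Longrightarrow> vnorm av n y < \<delta> \<Longrightarrow>
      vnorm av m (\<lambda>k. g y k - g zvec k - L y k) \<le> \<epsilon> / (N + 1) * vnorm av n y"
    using L unfolding has_diff0_def by blast
  have "0 < min (min \<delta> \<rho>0) \<epsilon> / K" using \<open>\<delta> > 0\<close> \<open>\<rho>0 > 0\<close> \<open>\<epsilon> > 0\<close> K(1) N by simp
  from beta_power_small[OF this] obtain j where "\<beta> ^ j < min (min \<delta> \<rho>0) \<epsilon> / K" by blast
  hence j: "\<beta> ^ j * K < min (min \<delta> \<rho>0) \<epsilon>" using K(1) N by (simp add: pos_less_divide_eq)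
  define y where "y = vscale (t ^ j) x"
  have ny: "vnorm av n y = \<beta> ^ j * N" unfolding y_def N_def by (simp add: vnorm_vscale av_tpow)
  have "\<beta> ^ j * N \<le> \<beta> ^ j * K" using K(1) beta_pos by (intro mult_left_mono) auto
  hence "vnorm av n y < \<delta>" "vnorm av n y \<le> \<rho>0" using j ny by auto
  moreover have y: "y \<in> vecs n" unfolding y_def using x by blast
  ultimately have "y \<in> D" and quad: "vnorm av m (\<lambda>k. g y k - g zvec k - G y k) \<le> \<kappa> * vnorm av n y ^ 2"
    using quadratic by auto
  have "(g y k - g zvec k - G y k) - (g y k - g zvec k - L y k) = L y k - G y k" by simp
  also have "\<dots> = t ^ j * (L x k - G x k)"
    unfolding y_def by (rule lin_map_vscale_diff[OF L_lin G x])
  finally have "t ^ j * (L x k - G x k) = (g y k - g zvec k - G y k) - (g y k - g zvec k - L y k)" ..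
  hence "\<beta> ^ j * av (L x k - G x k) \<le> max (\<kappa> * vnorm av n y ^ 2) (\<epsilon> / (N + 1) * vnorm av n y)"
    using av_diff vnorm_coord_le[OF \<open>k < m\<close>] quad \<delta>[OF y \<open>y \<in> D\<close> \<open>vnorm av n y < \<delta>\<close>]
    by (smt (verit, best) av_mult av_tpow max.mono)
  also have "\<dots> \<le> \<beta> ^ j * \<epsilon>"
  proof (rule max.boundedI)
    have "\<kappa> * vnorm av n y ^ 2 = \<beta> ^ j * (\<beta> ^ j * (\<kappa> * N ^ 2))"
      unfolding ny by (simp add: power2_eq_square mult_ac)
    also have "\<dots> \<le> \<beta> ^ j * (\<beta> ^ j * K)" using K(2) beta_pos by (intro mult_left_mono) auto
    finally show "\<kappa> * vnorm av n y ^ 2 \<le> \<beta> ^ j * \<epsilon>" using j beta_pos by (smt (verit) mult_left_mono zero_le_power)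
    have "N / (N + 1) \<le> 1" using N by simp
    hence "\<epsilon> * (N / (N + 1)) \<le> \<epsilon>" using \<open>\<epsilon> > 0\<close> by (intro mult_left_le) auto
    hence "\<beta> ^ j * (\<epsilon> * (N / (N + 1))) \<le> \<beta> ^ j * \<epsilon>" using beta_pos by (intro mult_left_mono) auto
    thus "\<epsilon> / (N + 1) * vnorm av n y \<le> \<beta> ^ j * \<epsilon>" unfolding ny by (simp add: mult_ac)
  qed
  finally show ?thesis using beta_pos by simp
qed

lemma has_diff0_unique:
  assumes L: "has_diff0 av n m D g L" and G: "lin_map n m G" and "\<rho>0 > 0" "\<kappa> \<ge> 0"
    and "\<And>x. x \<in> vecs n \<Longrightarrow> vnorm av n x \<le> \<rho>0 \<Longrightarrow>
      x \<in> D \<and> vnorm av m (\<lambda>k. g x k - g zvec k - G x k) \<le> \<kappa> * vnorm av n x ^ 2"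
    and x: "x \<in> vecs n"
  shows "L x = G x"
proof -
  have "L x k = G x k" if "k < m" for k
    using has_diff0_close[OF assms that] field_le_epsilon[of "av (L x k - G x k)" 0]
      av_nonneg[of "L x k - G x k"] by force
  moreover have "L x k = G x k" if "\<not> k < m" for k
    using L G x that unfolding has_diff0_def lin_map_def vecs_def by auto
  ultimately show ?thesis by blast
qed

end

context linearized
begin

lemma L_additive: "additive L"
  using L_linear unfolding pair_linear_def by blast

lemma L_add: "L (g + h) = L g + L h"
  and L_diff: "L (g - h) = L g - L h"
  and L_zero: "L 0 = 0"
  and L_pscale: "L (pscale z h) = vscale z (L h)"
  and L_vecs: "L h \<in> vecs c"
  using pair_linearD[OF L_linear] by blast+

lemma partial_maps_linear: "lin_map a c (\<lambda>x. L (x, 0))" "lin_map b c (\<lambda>y. L (0, y))"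
  unfolding lin_map_def
  using L_add[of "(_, 0)" "(_, 0)"] L_add[of "(0, _)" "(0, _)"] L_pscale[of _ "(_, 0)"]
    L_pscale[of _ "(0, _)"] L_vecs
  by (auto simp: pscale_def vscale_def plus_fun_def zero_fun_def)

lemma f_quadratic_near_0:
  assumes q: "q \<in> vecs a \<times> vecs b" "pnorm av a b q \<le> \<rho>0" and f0: "f zvec zvec = zvec"
  shows "vnorm av c (case_prod f q - L q) \<le> \<kappa> * pnorm av a b q ^ 2"
proof (cases "pnorm av a b q = 0")
  case True
  thus ?thesis using pnorm_eq_0_imp_eq_0[OF q(1)] f0 L_zero by (simp add: split_beta)
next
  case False
  hence pos: "0 < pnorm av a b q" using pnorm_nonneg[of av a b q] by simp
  have zero: "(0 :: 'a vpair) \<in> vecs a \<times> vecs b" by (simp add: zero_prod_def)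
  have "vnorm av c (case_prod f q - case_prod f 0 - (L q - L 0)) \<le> \<kappa> * pnorm av a b q * pnorm av a b (q - 0)"
    using remainder_le[OF pos q(2) zero q(1) _ order_refl] pnorm_nonneg[of av a b q] by simp
  thus ?thesis using f0 L_zero by (simp add: split_beta power2_eq_square mult.assoc)
qed

lemma partial_differential_eq:
  assumes f0: "f zvec zvec = zvec"
  shows "has_diff0 av a c {x. (x, zvec) \<in> \<Omega>} (\<lambda>x. f x zvec) La \<Longrightarrow> x \<in> vecs a \<Longrightarrow> La x = L (x, 0)"
    and "has_diff0 av b c {y. (zvec, y) \<in> \<Omega>} (\<lambda>y. f zvec y) Lb \<Longrightarrow> y \<in> vecs b \<Longrightarrow> Lb y = L (0, y)"
proof -
  have pnorm_left: "pnorm av a b (x, 0) = vnorm av a x" and pnorm_right: "pnorm av a b (0, y) = vnorm av b y"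
    for x y using vnorm_nonneg[of av a x] vnorm_nonneg[of av b y] unfolding pnorm_def
    by (simp_all add: max_def)
  show "La x = L (x, 0)" if "has_diff0 av a c {x. (x, zvec) \<in> \<Omega>} (\<lambda>x. f x zvec) La" "x \<in> vecs a"
    using that ball_subset f_quadratic_near_0[OF _ _ f0, of "(_, 0)"]
    by (intro has_diff0_unique[OF that(1) partial_maps_linear(1) \<rho>0_pos \<kappa>_nonneg _ that(2)])
      (use f0 in \<open>simp add: pnorm_left fun_diff_def\<close>)
  show "Lb y = L (0, y)" if "has_diff0 av b c {y. (zvec, y) \<in> \<Omega>} (\<lambda>y. f zvec y) Lb" "y \<in> vecs b"
    using that ball_subset f_quadratic_near_0[OF _ _ f0, of "(0, _)"]
    by (intro has_diff0_unique[OF that(1) partial_maps_linear(2) \<rho>0_pos \<kappa>_nonneg _ that(2)])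
      (use f0 in \<open>simp add: pnorm_right fun_diff_def\<close>)
qed

end

section \<open>An approximate inverse of the linear part\<close>

context discretely_valued
begin

text \<open>The step of a Baire-type argument: if no approximation works at level \<open>2j + 1\<close> for \<open>y\<close>,
  then next to any \<open>z\<close> there is a point for which no approximation works at level \<open>j\<close>; otherwise
  subtracting the approximations of \<open>z\<close> and of \<open>z + t\<^sup>j\<^sup>+\<^sup>1 y\<close> would approximate \<open>t\<^sup>2\<^sup>j\<^sup>+\<^sup>1 y\<close>.\<close>

lemma unapproximable_nearby:
  fixes L :: "'g::ab_group_add \<Rightarrow> 'a vec"
  assumes L: "additive L" and G: "\<And>g h. g \<in> G \<Longrightarrow> h \<in> G \<Longrightarrow> g - h \<in> G"
    and y: "y \<in> vecs_in R0 c" "\<forall>g\<in>G. \<beta> ^ (2 * j + 2) < vnorm av c (L g - vscale (t ^ (2 * j + 1)) y)"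
    and z: "z \<in> vecs_in R0 c"
  shows "\<exists>w\<in>vecs_in R0 c. vnorm av c (w - z) \<le> \<beta> ^ Suc j \<and>
    (\<forall>g\<in>G. \<beta> ^ (2 * j + 2) < vnorm av c (L g - vscale (t ^ j) w))"
proof (rule ccontr)
  assume "\<not> ?thesis"
  hence approx: "\<exists>g\<in>G. vnorm av c (L g - vscale (t ^ j) w) \<le> \<beta> ^ (2 * j + 2)"
    if "w \<in> vecs_in R0 c" "vnorm av c (w - z) \<le> \<beta> ^ Suc j" for w
    using that by (meson not_le)
  define w where "w = z + vscale (t ^ Suc j) y"
  have "vscale (t ^ Suc j) y \<in> vecs_in R0 c"
    by (rule vecs_in_vscale[OF R0_closed(5)[OF tpow_in_R0] y(1)])
  hence "w \<in> vecs_in R0 c" unfolding w_def using z R0_closed(3) by (intro vecs_in_add)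
  moreover have "vnorm av c (w - z) \<le> \<beta> ^ Suc j"
    using y(1) beta_pos unfolding w_def vecs_in_R0_iff
    by (simp add: vnorm_vscale av_tpow mult_left_le del: power_Suc)
  ultimately obtain g1 where g1: "g1 \<in> G" "vnorm av c (L g1 - vscale (t ^ j) w) \<le> \<beta> ^ (2 * j + 2)"
    using approx by blast
  obtain g2 where g2: "g2 \<in> G" "vnorm av c (L g2 - vscale (t ^ j) z) \<le> \<beta> ^ (2 * j + 2)"
    using approx[OF z] beta_pos by auto
  have "t ^ j * t ^ Suc j = t ^ (2 * j + 1)" by (simp add: power_add[symmetric] mult_2)
  hence "vscale (t ^ j) w - vscale (t ^ j) z = vscale (t ^ (2 * j + 1)) y"
    unfolding w_def by (simp add: vscale_add vscale_vscale del: power_Suc)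
  hence "L (g1 - g2) - vscale (t ^ (2 * j + 1)) y =
      (L g1 - vscale (t ^ j) w) - (L g2 - vscale (t ^ j) z)"
    using additive.diff[OF L] by (simp add: algebra_simps)
  hence "vnorm av c (L (g1 - g2) - vscale (t ^ (2 * j + 1)) y) \<le> \<beta> ^ (2 * j + 2)"
    using vnorm_diff[of c "L g1 - vscale (t ^ j) w" "L g2 - vscale (t ^ j) z"] g1(2) g2(2) by simp
  thus False using y(2) G[OF g1(1) g2(1)] by fastforce
qed

text \<open>If no level \<open>N\<close> worked, the previous lemma would produce a Cauchy sequence in \<open>R\<^sub>0\<^sup>c\<close>
  whose limit has no multiple in the image of \<open>G\<close>.\<close>

lemma uniform_approximation:
  fixes L :: "'g::ab_group_add \<Rightarrow> 'a vec"
  assumes L: "additive L" and G: "\<And>g h. g \<in> G \<Longrightarrow> h \<in> G \<Longrightarrow> g - h \<in> G"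
    and hits: "\<And>y. y \<in> vecs_in R0 c \<Longrightarrow> \<exists>J. \<exists>g\<in>G. L g = vscale (t ^ J) y"
  shows "\<exists>N. \<forall>y\<in>vecs_in R0 c. \<exists>g\<in>G. vnorm av c (L g - vscale (t ^ N) y) \<le> \<beta> ^ Suc N"
proof (rule ccontr)
  assume "\<not> ?thesis"
  hence bad: "\<exists>y\<in>vecs_in R0 c. \<forall>g\<in>G. \<beta> ^ Suc N < vnorm av c (L g - vscale (t ^ N) y)" for N
    by (meson not_le)
  define unapprox where
    "unapprox j w \<longleftrightarrow> (\<forall>g\<in>G. \<beta> ^ (2 * j + 2) < vnorm av c (L g - vscale (t ^ j) w))" for j w
  have "\<exists>zs. \<forall>j. zs j \<in> vecs_in R0 c \<and>
      vnorm av c (zs (Suc j) - zs j) \<le> \<beta> ^ Suc j \<and> unapprox j (zs (Suc j))"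
  proof (rule dependent_nat_choice)
    show "\<exists>z. z \<in> vecs_in R0 c" using zero_in_vecs_in R0_closed(1) by blast
    fix z j assume "z \<in> vecs_in R0 c"
    obtain y where "y \<in> vecs_in R0 c"
      "\<forall>g\<in>G. \<beta> ^ (2 * j + 2) < vnorm av c (L g - vscale (t ^ (2 * j + 1)) y)"
      using bad[of "2 * j + 1"] by auto
    from unapproximable_nearby[OF L G this \<open>z \<in> _\<close>]
    show "\<exists>w. w \<in> vecs_in R0 c \<and> vnorm av c (w - z) \<le> \<beta> ^ Suc j \<and> unapprox j w"
      unfolding unapprox_def by blast
  qed
  then obtain zs where zs: "\<And>j. zs j \<in> vecs_in R0 c"
    "\<And>j. vnorm av c (zs (Suc j) - zs j) \<le> \<beta> ^ Suc j" "\<And>j. unapprox j (zs (Suc j))"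
    by blast
  obtain y where "y \<in> vecs_in R0 c" and y: "\<And>j. vnorm av c (y - zs j) \<le> \<beta> ^ Suc j"
    by (rule vecs_in_limit[OF complete_saturated_R0 zs(1,2)]) auto
  then obtain J g where g: "g \<in> G" "L g = vscale (t ^ J) y" using hits by blast
  have "vnorm av c (L g - vscale (t ^ J) (zs (Suc J))) = \<beta> ^ J * vnorm av c (y - zs (Suc J))"
    unfolding g(2) vscale_diff[symmetric] by (simp add: vnorm_vscale av_tpow)
  also have "\<dots> \<le> \<beta> ^ J * \<beta> ^ Suc (Suc J)"
    using y[of "Suc J"] beta_pos by (intro mult_left_mono) auto
  also have "\<dots> = \<beta> ^ (2 * J + 2)" by (simp add: power_add[symmetric] mult_2)
  finally show False using zs(3)[of J] g(1) unfolding unapprox_def by fastforce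
qed

lemma pnorm_le_1:
  assumes "V \<subseteq> R0" "W \<subseteq> R0" "h \<in> vecs_in V a \<times> vecs_in W b"
  shows "pnorm av a b h \<le> 1"
proof -
  have "fst h \<in> vecs_in R0 a" "snd h \<in> vecs_in R0 b"
    using assms unfolding vecs_in_def by auto
  thus ?thesis unfolding pnorm_le_iff[OF zero_le_one] vecs_in_R0_iff by simp
qed

text \<open>Approximation at level \<open>N\<close> rescales to every small \<open>e\<close>: writing \<open>|e| = \<beta>\<^sup>n\<close>, apply it to
  \<open>e / t\<^sup>n\<close> and multiply the approximant by \<open>t\<^sup>n\<^sup>-\<^sup>N\<close>.\<close>

lemma approximate_preimage:
  assumes L: "pair_linear c L" and V: "complete_saturated V" and W: "complete_saturated W"
    and N: "\<forall>y\<in>vecs_in R0 c. \<exists>g\<in>vecs_in V a \<times> vecs_in W b.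
      vnorm av c (L g - vscale (t ^ N) y) \<le> \<beta> ^ Suc N"
    and e: "e \<in> vecs c" "vnorm av c e \<le> \<beta> ^ N"
  shows "\<exists>h\<in>vecs_in V a \<times> vecs_in W b.
    pnorm av a b h \<le> vnorm av c e / \<beta> ^ N \<and> vnorm av c (L h - e) \<le> \<beta> * vnorm av c e"
proof (cases "vnorm av c e = 0")
  case True
  hence "e = 0" using vnorm_eq_0_imp_eq_0 e(1) by blast
  moreover have "(0 :: 'a vpair) \<in> vecs_in V a \<times> vecs_in W b"
    using zero_in_vecs_in[OF complete_saturatedD(2)[OF V]] zero_in_vecs_in[OF complete_saturatedD(2)[OF W]]
    by (simp add: zero_prod_def)
  ultimately show ?thesis using pair_linearD(4)[OF L] True by (intro bexI[of _ 0]) (auto simp: pnorm_def)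
next
  case False
  have "\<beta> ^ N \<le> 1" using beta_pos beta_less_1 by (simp add: power_le_one)
  hence "vnorm av c e \<le> 1" using e(2) by linarith
  then obtain n where n: "vnorm av c e = \<beta> ^ n" using vnorm_in_value_group[OF False] by blast
  hence "N \<le> n" using e(2) beta_pos beta_less_1 by (simp add: power_decreasing_iff)
  define y where "y = vscale (inverse (t ^ n)) e"
  have "vnorm av c y = 1" unfolding y_def using n beta_pos by (simp add: vnorm_vscale av_inverse av_tpow)
  hence "y \<in> vecs_in R0 c" unfolding vecs_in_R0_iff y_def using e(1) by auto
  then obtain g where g: "g \<in> vecs_in V a \<times> vecs_in W b" "vnorm av c (L g - vscale (t ^ N) y) \<le> \<beta> ^ Suc N"
    using N by blast
  define h where "h = pscale (t ^ (n - N)) g"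
  have "h \<in> vecs_in V a \<times> vecs_in W b"
    using g(1) complete_saturated_tpow_mult[OF V] complete_saturated_tpow_mult[OF W]
    unfolding h_def pscale_def by (auto intro: vecs_in_vscale)
  moreover have "pnorm av a b h \<le> \<beta> ^ (n - N)"
    using pnorm_le_1[OF complete_saturatedD(1)[OF V] complete_saturatedD(1)[OF W] g(1)] beta_pos
    unfolding h_def by (simp add: pnorm_pscale av_tpow mult_left_le)
  moreover have "\<beta> ^ (n - N) = vnorm av c e / \<beta> ^ N"
    using n \<open>N \<le> n\<close> beta_pos by (simp add: power_diff)
  moreover have "vnorm av c (L h - e) \<le> \<beta> * vnorm av c e"
  proof -
    have "t ^ (n - N) * t ^ N = t ^ n" using \<open>N \<le> n\<close> by (simp add: power_add[symmetric])
    hence "t ^ (n - N) * (t ^ N * inverse (t ^ n)) = 1"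
      using t_nonzero by (simp add: mult.assoc[symmetric])
    hence "e = vscale (t ^ (n - N)) (vscale (t ^ N) y)"
      unfolding y_def by (simp add: vscale_vscale fun_eq_iff)
    hence "L h - e = vscale (t ^ (n - N)) (L g - vscale (t ^ N) y)"
      unfolding h_def pair_linearD(5)[OF L] by (simp add: vscale_diff)
    hence "vnorm av c (L h - e) = \<beta> ^ (n - N) * vnorm av c (L g - vscale (t ^ N) y)"
      by (simp add: vnorm_vscale av_tpow)
    also have "\<dots> \<le> \<beta> ^ (n - N) * \<beta> ^ Suc N"
      using g(2) beta_pos by (intro mult_left_mono) auto
    also have "\<dots> = \<beta> * vnorm av c e"
      using n \<open>N \<le> n\<close> by (simp add: power_add[symmetric])
    finally show ?thesis .
  qed
  ultimately show ?thesis by (intro bexI[of _ h]) auto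
qed

end

section \<open>Newton iteration\<close>

context linearized
begin

lemma f_lipschitz:
  assumes "0 < R" "R \<le> \<rho>0" "q \<in> vecs a \<times> vecs b" "q' \<in> vecs a \<times> vecs b"
    "pnorm av a b q \<le> R" "pnorm av a b q' \<le> R"
  shows "vnorm av c (case_prod f q' - case_prod f q) \<le> max (\<kappa> * R) \<Lambda> * pnorm av a b (q' - q)"
proof -
  have "case_prod f q' - case_prod f q = (case_prod f q' - case_prod f q - (L q' - L q)) + L (q' - q)"
    using L_diff by simp
  hence "vnorm av c (case_prod f q' - case_prod f q) \<le>
      max (vnorm av c (case_prod f q' - case_prod f q - (L q' - L q))) (vnorm av c (L (q' - q)))"
    using vnorm_add by metis
  also have "\<dots> \<le> max (\<kappa> * R * pnorm av a b (q' - q)) (\<Lambda> * pnorm av a b (q' - q))"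
    using remainder_le[OF assms] L_bound by (rule max.mono)
  also have "\<dots> = max (\<kappa> * R) \<Lambda> * pnorm av a b (q' - q)"
    using pnorm_nonneg[of av a b "q' - q"] by (simp add: max_mult_distrib_right)
  finally show ?thesis .
qed

lemma newton_step:
  assumes V: "complete_saturated V" and W: "complete_saturated W"
    and N: "\<forall>y\<in>vecs_in R0 c. \<exists>g\<in>vecs_in V a \<times> vecs_in W b.
      vnorm av c (L g - vscale (t ^ N) y) \<le> \<beta> ^ Suc N"
    and R: "0 < R" "R \<le> \<rho>0" "R \<le> 1" "\<kappa> * R \<le> \<beta> ^ Suc N"
    and g: "g \<in> vecs_in V a \<times> vecs_in W b" "pnorm av a b g \<le> R"
    and y: "y \<in> vecs c" "vnorm av c (y - case_prod f g) \<le> R * \<beta> ^ N"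
  shows "\<exists>h\<in>vecs_in V a \<times> vecs_in W b.
    pnorm av a b h \<le> vnorm av c (y - case_prod f g) / \<beta> ^ N \<and>
    g + h \<in> vecs_in V a \<times> vecs_in W b \<and> pnorm av a b (g + h) \<le> R \<and>
    vnorm av c (y - case_prod f (g + h)) \<le> \<beta> * vnorm av c (y - case_prod f g)"
proof -
  define e where "e = y - case_prod f g"
  note G_vecs = subsetD[OF vpairs_in_subset_vecs]
  have "g \<in> \<Omega>" using ball_subset[OF G_vecs[OF g(1)]] g(2) R(2) by simp
  hence "e \<in> vecs c" unfolding e_def using y(1) f_vecs by blast
  moreover have "vnorm av c e \<le> \<beta> ^ N"
  proof -
    have "R * \<beta> ^ N \<le> \<beta> ^ N" using R(1,3) beta_pos by (simp add: mult_left_le_one_le)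
    thus ?thesis using y(2) unfolding e_def by linarith
  qed
  ultimately obtain h where h: "h \<in> vecs_in V a \<times> vecs_in W b"
    "pnorm av a b h \<le> vnorm av c e / \<beta> ^ N" "vnorm av c (L h - e) \<le> \<beta> * vnorm av c e"
    using approximate_preimage[OF L_linear V W N] by blast
  have "0 < \<beta> ^ N" using beta_pos by simp
  hence "vnorm av c e / \<beta> ^ N \<le> R" using y(2) unfolding e_def by (simp add: pos_divide_le_eq)
  hence "pnorm av a b h \<le> R" using h(2) by linarith
  have "g + h \<in> vecs_in V a \<times> vecs_in W b" by (rule vpairs_in_add_diff(1)[OF V W g(1) h(1)])
  moreover have "pnorm av a b (g + h) \<le> R"
    using pnorm_add[of a b g h] g(2) \<open>pnorm av a b h \<le> R\<close> by simp
  moreover have "vnorm av c (y - case_prod f (g + h)) \<le> \<beta> * vnorm av c e"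
  proof -
    have "y - case_prod f (g + h) = (e - L h) - (case_prod f (g + h) - case_prod f g - (L (g + h) - L g))"
      unfolding e_def using L_add by simp
    hence "vnorm av c (y - case_prod f (g + h)) \<le>
        max (vnorm av c (e - L h)) (vnorm av c (case_prod f (g + h) - case_prod f g - (L (g + h) - L g)))"
      using vnorm_diff by metis
    moreover have "vnorm av c (e - L h) \<le> \<beta> * vnorm av c e"
      using h(3) vnorm_minus_commute by metis
    moreover have "vnorm av c (case_prod f (g + h) - case_prod f g - (L (g + h) - L g)) \<le> \<beta> * vnorm av c e"
    proof -
      have "vnorm av c (case_prod f (g + h) - case_prod f g - (L (g + h) - L g)) \<le> \<kappa> * R * pnorm av a b h"
        using remainder_le[OF R(1,2) G_vecs[OF g(1)] G_vecs[OF \<open>g + h \<in> _\<close>] g(2) \<open>pnorm av a b (g + h) \<le> R\<close>]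
        by simp
      also have "\<dots> \<le> \<beta> ^ Suc N * (vnorm av c e / \<beta> ^ N)"
        using R(4) h(2) pnorm_nonneg[of av a b h] \<kappa>_nonneg R(1) beta_pos
        by (intro mult_mono) (auto simp del: power_Suc)
      also have "\<dots> = \<beta> * vnorm av c e" using beta_pos by simp
      finally show ?thesis .
    qed
    ultimately show ?thesis by simp
  qed
  ultimately show ?thesis using h(1,2) unfolding e_def by (intro bexI[of _ h] conjI) assumption+
qed

text \<open>Each Newton step divides the residual by \<open>\<alpha>\<close>, and its correction has size at most
  \<open>\<beta>\<^sup>k\<^sup>+\<^sup>1\<close> because \<open>|y| \<le> R \<beta>\<^sup>N\<close> and \<open>R \<le> \<beta>\<close>.\<close>

lemma newton_iterates:
  assumes V: "complete_saturated V" and W: "complete_saturated W" and f0: "f zvec zvec = zvec"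
    and N: "\<forall>y\<in>vecs_in R0 c. \<exists>g\<in>vecs_in V a \<times> vecs_in W b.
      vnorm av c (L g - vscale (t ^ N) y) \<le> \<beta> ^ Suc N"
    and R: "0 < R" "R \<le> \<rho>0" "R \<le> \<beta>" "\<kappa> * R \<le> \<beta> ^ Suc N"
    and y: "y \<in> vecs c" "vnorm av c y \<le> R * \<beta> ^ N"
  shows "\<exists>gs. \<forall>k. (gs k \<in> vecs_in V a \<times> vecs_in W b \<and> pnorm av a b (gs k) \<le> R \<and>
    vnorm av c (y - case_prod f (gs k)) \<le> \<beta> ^ k * vnorm av c y) \<and>
    pnorm av a b (gs (Suc k) - gs k) \<le> \<beta> ^ Suc k"
proof (rule dependent_nat_choice)
  let ?G = "vecs_in V a \<times> vecs_in W b" and ?ny = "vnorm av c y"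
  have "0 \<in> ?G" using zero_in_vecs_in complete_saturatedD(2) V W unfolding zero_prod_def by auto
  thus "\<exists>g. g \<in> ?G \<and> pnorm av a b g \<le> R \<and> vnorm av c (y - case_prod f g) \<le> \<beta> ^ 0 * ?ny"
    using R(1) f0 by (intro exI[of _ 0]) (simp add: split_beta)
next
  let ?G = "vecs_in V a \<times> vecs_in W b" and ?ny = "vnorm av c y"
  fix g k assume g: "g \<in> ?G \<and> pnorm av a b g \<le> R \<and> vnorm av c (y - case_prod f g) \<le> \<beta> ^ k * ?ny"
  have "\<beta> ^ k * ?ny \<le> ?ny" using beta_pos beta_less_1 vnorm_nonneg[of av c y]
    by (simp add: mult_left_le_one_le power_le_one)
  hence "vnorm av c (y - case_prod f g) \<le> R * \<beta> ^ N" using g y(2) by linarith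
  moreover have "R \<le> 1" using R(3) beta_less_1 by linarith
  moreover have "g \<in> ?G" "pnorm av a b g \<le> R" using g by simp_all
  ultimately have "\<exists>h\<in>?G. pnorm av a b h \<le> vnorm av c (y - case_prod f g) / \<beta> ^ N \<and>
      g + h \<in> ?G \<and> pnorm av a b (g + h) \<le> R \<and>
      vnorm av c (y - case_prod f (g + h)) \<le> \<beta> * vnorm av c (y - case_prod f g)"
    using newton_step[OF V W N R(1,2) _ R(4) _ _ y(1)] by blast
  then obtain h where h: "pnorm av a b h \<le> vnorm av c (y - case_prod f g) / \<beta> ^ N"
    "g + h \<in> ?G" "pnorm av a b (g + h) \<le> R" "vnorm av c (y - case_prod f (g + h)) \<le> \<beta> * vnorm av c (y - case_prod f g)"
    by (elim bexE conjE) (rule that)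
  have "\<beta> * vnorm av c (y - case_prod f g) \<le> \<beta> * (\<beta> ^ k * ?ny)"
    using g beta_pos by (intro mult_left_mono) auto
  hence residual: "vnorm av c (y - case_prod f (g + h)) \<le> \<beta> ^ Suc k * ?ny"
    using h(4) by (simp add: mult.assoc)
  have step: "pnorm av a b (g + h - g) \<le> \<beta> ^ Suc k"
  proof -
    have "vnorm av c (y - case_prod f g) / \<beta> ^ N \<le> \<beta> ^ k * (R * \<beta> ^ N) / \<beta> ^ N"
      using g y(2) beta_pos by (intro divide_right_mono) (auto intro: order_trans mult_left_mono)
    also have "\<dots> \<le> \<beta> ^ Suc k" using R(3) beta_pos by (simp add: mult_left_mono)
    finally show ?thesis using h(1) by simp
  qed
  show "\<exists>g'. (g' \<in> ?G \<and> pnorm av a b g' \<le> R \<and> vnorm av c (y - case_prod f g') \<le> \<beta> ^ Suc k * ?ny) \<and>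
      pnorm av a b (g' - g) \<le> \<beta> ^ Suc k"
    by (intro exI[of _ "g + h"] conjI h(2,3) residual step)
qed

text \<open>\<open>f\<close> is Lipschitz near \<open>0\<close>, so the residuals \<open>y - f(g\<^sub>k)\<close>, which decay like \<open>\<beta>\<^sup>k\<close>,
  converge to \<open>y - f(q)\<close>.\<close>

lemma newton_limit_solves:
  assumes V: "complete_saturated V" and W: "complete_saturated W" and R: "0 < R" "R \<le> \<rho>0"
    and y: "y \<in> vecs c"
    and gs: "\<And>k. gs k \<in> vecs_in V a \<times> vecs_in W b" "\<And>k. pnorm av a b (gs k) \<le> R"
      "\<And>k. vnorm av c (y - case_prod f (gs k)) \<le> \<beta> ^ k * vnorm av c y"
      "\<And>k. pnorm av a b (gs (Suc k) - gs k) \<le> \<beta> ^ Suc k"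
  shows "\<exists>q\<in>vecs_in V a \<times> vecs_in W b. q \<in> \<Omega> \<and> case_prod f q = y"
proof -
  note G_vecs = subsetD[OF vpairs_in_subset_vecs]
  obtain q where q_G: "q \<in> vecs_in V a \<times> vecs_in W b" and q: "\<And>k. pnorm av a b (q - gs k) \<le> \<beta> ^ Suc k"
    by (rule vpairs_limit[OF V W gs(1) gs(4)]) auto
  obtain m where "\<beta> ^ m < R" using beta_power_small R(1) by blast
  moreover have "\<beta> ^ Suc m \<le> \<beta> ^ m" using beta_pos beta_less_1 by (simp add: mult_left_le_one_le)
  ultimately have "\<beta> ^ Suc m \<le> R" by linarith
  hence "pnorm av a b q \<le> R"
    using pnorm_add[of a b "q - gs m" "gs m"] q[of m] gs(2)[of m] by simp
  hence "q \<in> \<Omega>" using ball_subset G_vecs[OF q_G] R(2) by simp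
  have "vnorm av c (y - case_prod f q) \<le> (vnorm av c y + max (\<kappa> * R) \<Lambda>) * \<beta> ^ k" for k
  proof -
    have "y - case_prod f q = (y - case_prod f (gs k)) - (case_prod f q - case_prod f (gs k))" by simp
    hence "vnorm av c (y - case_prod f q) \<le>
        max (vnorm av c (y - case_prod f (gs k))) (vnorm av c (case_prod f q - case_prod f (gs k)))"
      using vnorm_diff by metis
    also have "\<dots> \<le> max (\<beta> ^ k * vnorm av c y) (max (\<kappa> * R) \<Lambda> * \<beta> ^ Suc k)"
    proof (rule max.mono[OF gs(3)])
      have "vnorm av c (case_prod f q - case_prod f (gs k)) \<le> max (\<kappa> * R) \<Lambda> * pnorm av a b (q - gs k)"
        by (rule f_lipschitz[OF R G_vecs[OF gs(1)] G_vecs[OF q_G] gs(2) \<open>pnorm av a b q \<le> R\<close>])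
      also have "\<dots> \<le> max (\<kappa> * R) \<Lambda> * \<beta> ^ Suc k"
        using q[of k] \<Lambda>_nonneg by (intro mult_left_mono) auto
      finally show "vnorm av c (case_prod f q - case_prod f (gs k)) \<le> max (\<kappa> * R) \<Lambda> * \<beta> ^ Suc k" .
    qed
    also have "\<dots> \<le> (vnorm av c y + max (\<kappa> * R) \<Lambda>) * \<beta> ^ k"
      using vnorm_nonneg[of av c y] \<Lambda>_nonneg beta_pos beta_less_1
      by (auto simp: algebra_simps mult_left_le_one_le intro: add_increasing2 add_increasing)
    finally show ?thesis .
  qed
  hence "vnorm av c (y - case_prod f q) \<le> 0" by (rule le_0_if_le_geometric)
  hence "y - case_prod f q = 0"
    using vnorm_eq_0_imp_eq_0 vnorm_nonneg y f_vecs[OF \<open>q \<in> \<Omega>\<close>] by (metis antisym vecs_diff)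
  thus ?thesis using q_G \<open>q \<in> \<Omega>\<close> by auto
qed

lemma local_surjectivity:
  assumes V: "complete_saturated V" and W: "complete_saturated W" and f0: "f zvec zvec = zvec"
    and N: "\<forall>y\<in>vecs_in R0 c. \<exists>g\<in>vecs_in V a \<times> vecs_in W b.
      vnorm av c (L g - vscale (t ^ N) y) \<le> \<beta> ^ Suc N"
  shows "\<exists>\<epsilon>>0. \<forall>y\<in>vecs c. vnorm av c y \<le> \<epsilon> \<longrightarrow>
    (\<exists>q\<in>vecs_in V a \<times> vecs_in W b. q \<in> \<Omega> \<and> case_prod f q = y)"
proof (intro exI conjI ballI impI)
  define R where "R = min \<rho>0 (min \<beta> (\<beta> ^ Suc N / (\<kappa> + 1)))"
  have R: "0 < R" "R \<le> \<rho>0" "R \<le> \<beta>" unfolding R_def using \<rho>0_pos \<kappa>_nonneg beta_pos by auto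
  have "\<kappa> * R \<le> (\<kappa> + 1) * (\<beta> ^ Suc N / (\<kappa> + 1))"
    unfolding R_def using \<kappa>_nonneg beta_pos \<rho>0_pos by (intro mult_mono) auto
  hence \<kappa>R: "\<kappa> * R \<le> \<beta> ^ Suc N" using \<kappa>_nonneg by simp
  show "0 < R * \<beta> ^ N" using R(1) beta_pos by simp
  fix y assume y: "y \<in> vecs c" "vnorm av c y \<le> R * \<beta> ^ N"
  obtain gs where gs: "\<forall>k. (gs k \<in> vecs_in V a \<times> vecs_in W b \<and> pnorm av a b (gs k) \<le> R \<and>
      vnorm av c (y - case_prod f (gs k)) \<le> \<beta> ^ k * vnorm av c y) \<and>
      pnorm av a b (gs (Suc k) - gs k) \<le> \<beta> ^ Suc k"
    using newton_iterates[OF V W f0 N R \<kappa>R y] by (elim exE)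
  show "\<exists>q\<in>vecs_in V a \<times> vecs_in W b. q \<in> \<Omega> \<and> case_prod f q = y"
    by (rule newton_limit_solves[OF V W R(1,2) y(1)]) (use gs in blast)+
qed

end

lemma (in discretely_valued) loc_vecs_clear_denominators:
  assumes x: "x \<in> loc_vecs t V n" and V: "complete_saturated V"
  shows "\<exists>J0. \<forall>J\<ge>J0. vscale (t ^ J) x \<in> vecs_in V n"
proof -
  have "\<forall>i. \<exists>j. i < n \<longrightarrow> (\<exists>v\<in>V. x i = v / t ^ j)" using x unfolding loc_vecs_def by auto
  then obtain j where j: "\<And>i. i < n \<Longrightarrow> \<exists>v\<in>V. x i = v / t ^ j i" by (metis choice)
  have "vscale (t ^ J) x \<in> vecs_in V n" if J: "(\<Sum>i<n. j i) \<le> J" for J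
    unfolding vecs_in_def
  proof (intro CollectI conjI allI impI)
    show "vscale (t ^ J) x \<in> vecs n" using x unfolding loc_vecs_def by auto
    fix i assume "i < n"
    then obtain v where v: "v \<in> V" "x i = v / t ^ j i" using j by blast
    have "j i \<le> J" using J \<open>i < n\<close> member_le_sum[of i "{..<n}" j] by simp
    hence "t ^ J = t ^ (J - j i) * t ^ j i" by (simp add: power_add[symmetric])
    hence "vscale (t ^ J) x i = t ^ (J - j i) * v" using v(2) t_nonzero by simp
    thus "vscale (t ^ J) x i \<in> V" using complete_saturated_tpow_mult[OF V v(1)] by simp
  qed
  thus ?thesis by blast
qed

lemma (in linearized) linear_part_hits_multiples:
  assumes V: "complete_saturated V" and W: "complete_saturated W" and f0: "f zvec zvec = zvec"
    and La: "has_diff0 av a c {x. (x, zvec) \<in> \<Omega>} (\<lambda>x. f x zvec) La"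
    and Lb: "has_diff0 av b c {y. (zvec, y) \<in> \<Omega>} (\<lambda>y. f zvec y) Lb"
    and onto: "{(\<lambda>k. La x k + Lb y k) | x y. x \<in> loc_vecs t V a \<and> y \<in> loc_vecs t W b} = vecs c"
    and y: "y \<in> vecs_in R0 c"
  shows "\<exists>J. \<exists>g\<in>vecs_in V a \<times> vecs_in W b. L g = vscale (t ^ J) y"
proof -
  obtain x x' where x: "x \<in> loc_vecs t V a" "x' \<in> loc_vecs t W b" and y_eq: "y = (\<lambda>k. La x k + Lb x' k)"
    using y vecs_in_subset_vecs onto by blast
  have "x \<in> vecs a" "x' \<in> vecs b" using x unfolding loc_vecs_def by auto
  hence "La x = L (x, 0)" "Lb x' = L (0, x')"
    using partial_differential_eq[OF f0] La Lb by blast+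
  moreover have "L (x, x') = L (x, 0) + L (0, x')" using L_add[of "(x, 0)" "(0, x')"] by simp
  ultimately have "y = L (x, x')" unfolding y_eq by (simp add: fun_eq_iff)
  obtain J1 J2 where J1: "\<forall>J\<ge>J1. vscale (t ^ J) x \<in> vecs_in V a"
    and J2: "\<forall>J\<ge>J2. vscale (t ^ J) x' \<in> vecs_in W b"
    using loc_vecs_clear_denominators[OF x(1) V] loc_vecs_clear_denominators[OF x(2) W] by blast
  have "pscale (t ^ (J1 + J2)) (x, x') \<in> vecs_in V a \<times> vecs_in W b"
    using J1 J2 by (simp add: pscale_def)
  moreover have "L (pscale (t ^ (J1 + J2)) (x, x')) = vscale (t ^ (J1 + J2)) y"
    using L_pscale \<open>y = L (x, x')\<close> by simp
  ultimately show ?thesis by (intro exI[of _ "J1 + J2"] bexI[of _ "pscale (t ^ (J1 + J2)) (x, x')"])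
qed

theorem proposition3p2:
  fixes T R0 F1 F2 V W :: "'a::field set"
    and t :: 'a and \<alpha> :: real and a b c :: nat
    and \<Omega> :: "((nat \<Rightarrow> 'a) \<times> (nat \<Rightarrow> 'a)) set"
    and f :: "(nat \<Rightarrow> 'a) \<Rightarrow> (nat \<Rightarrow> 'a) \<Rightarrow> (nat \<Rightarrow> 'a)"
  assumes T_dvr: "dvr_unif T t" and T_complete: "t_complete t T"
    and R0_dvr: "dvr_frac R0 t" and R0_complete: "t_complete t R0"
    and T_sub: "T \<subseteq> R0"
    and alpha: "\<alpha> > 1"
    and F1: "subfield F1" "T \<subseteq> F1"
    and F2: "subfield F2" "T \<subseteq> F2"
    and V_sub: "V \<subseteq> F1 \<inter> R0" "submodule T V" "t_complete t V"
    and W_sub: "W \<subseteq> F2 \<inter> R0" "submodule T W" "t_complete t W"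
    and VW: "{v + w | v w. v \<in> V \<and> w \<in> W} = R0"
    and Vt: "V \<inter> tpow_mod t 1 R0 = tpow_mod t 1 V"
    and Wt: "W \<inter> tpow_mod t 1 R0 = tpow_mod t 1 W"
    and abc: "a > 0" "b > 0" "c > 0"
    and \<Omega>_open: "open_in_prod (dv_abs R0 t \<alpha>) a b \<Omega>" and \<Omega>0: "(zvec, zvec) \<in> \<Omega>"
    and f_an: "analytic_on_prod (dv_abs R0 t \<alpha>) a b c \<Omega> f"
    and f0: "f zvec zvec = zvec"
    and diff: "\<exists>La Lb.
        has_diff0 (dv_abs R0 t \<alpha>) a c {x. (x, zvec) \<in> \<Omega>} (\<lambda>x. f x zvec) La \<and>
        has_diff0 (dv_abs R0 t \<alpha>) b c {y. (zvec, y) \<in> \<Omega>} (\<lambda>y. f zvec y) Lb \<and>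
        {(\<lambda>k. La x k + Lb y k) | x y. x \<in> loc_vecs t V a \<and> y \<in> loc_vecs t W b} = vecs c"
  shows "\<exists>\<epsilon>>0. \<forall>y\<in>vecs c. vnorm (dv_abs R0 t \<alpha>) c y \<le> \<epsilon> \<longrightarrow>
           (\<exists>v w. v \<in> vecs a \<and> (\<forall>i<a. v i \<in> V) \<and> w \<in> vecs b \<and> (\<forall>i<b. w i \<in> W) \<and>
                  (v, w) \<in> \<Omega> \<and> f v w = y)"
proof -
  interpret discretely_valued R0 t \<alpha>
    using R0_dvr R0_complete alpha by unfold_locales
  obtain L \<rho>0 \<kappa> \<Lambda> where "linearized R0 t \<alpha> a b c \<Omega> f L \<rho>0 \<kappa> \<Lambda>"
    using analytic_linearization[OF \<Omega>_open \<Omega>0 f_an] .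
  then interpret linearized R0 t \<alpha> a b c \<Omega> f L \<rho>0 \<kappa> \<Lambda> .
  have T: "subring T" "t \<in> T" using T_dvr unfolding dvr_unif_def by auto
  have V: "complete_saturated V" and W: "complete_saturated W"
    using submodule_complete_saturated[OF V_sub(2) T _ V_sub(3) Vt]
      submodule_complete_saturated[OF W_sub(2) T _ W_sub(3) Wt] V_sub(1) W_sub(1) by auto
  obtain La Lb where La: "has_diff0 av a c {x. (x, zvec) \<in> \<Omega>} (\<lambda>x. f x zvec) La"
    and Lb: "has_diff0 av b c {y. (zvec, y) \<in> \<Omega>} (\<lambda>y. f zvec y) Lb"
    and onto: "{(\<lambda>k. La x k + Lb y k) | x y. x \<in> loc_vecs t V a \<and> y \<in> loc_vecs t W b} = vecs c"
    using diff by blast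
  from uniform_approximation[OF L_additive vpairs_in_add_diff(2)[OF V W]
      linear_part_hits_multiples[OF V W f0 La Lb onto]]
  obtain N where "\<forall>y\<in>vecs_in R0 c. \<exists>g\<in>vecs_in V a \<times> vecs_in W b.
      vnorm av c (L g - vscale (t ^ N) y) \<le> \<beta> ^ Suc N"
    by blast
  from local_surjectivity[OF V W f0 this] show ?thesis
    unfolding vecs_in_def by (fastforce simp: split_beta)
qed

end
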